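(* With $\chi=1$ the trivial character, $\mathcal S^*(\mathcal O_1)^{\chi}=\mathcal S^*(\mathcal O_1)^{\chi,\infty}$; that is, every generalized $(G,\chi)$-invariant vector of $\mathcal S^*(\mathcal O_1)\otimes(|\det|\boxtimes|\det|^{-1})$ is $(G,\chi)$-invariant.
   Context: $F$ nonarchimedean local field of characteristic $0$, $G=G'=\mathrm{GL}_2(F)$ acting on $M_2:=M_{2\times2}(F)$, $\mathcal O_1$ the set of rank one matrices, $\mathcal S(\mathcal O_1)$ locally constant compactly supported functions on $\mathcal O_1$ with $((g_1,g_2)f)(M)=f(g_1^{-1}Mg_2)$, $\mathcal S^*(\mathcal O_1)$ its algebraic dual with contragredient action. For a character $\chi$ of $G$, $\mathcal S^*(\mathcal O_1)^\chi$ is the space of $G$-invariant vectors (first factor) in $\mathcal S^*(\mathcal O_1)\otimes(|\det|\boxtimes|\det|^{-1})\otimes\chi^{-1}$. A vector $v$ of a $G$-representation is generalized $\chi$-invariant if for some $k\ge0$, $(g_0-\chi(g_0))\cdots(g_k-\chi(g_k))v=0$ for all $g_0,\dots,g_k\in G$; $\mathcal S^*(\mathcal O_1)^{\chi,\infty}$ is the space of generalized $(G,\chi)$-invariant vectors in $\mathcal S^*(\mathcal O_1)\otimes(|\det|\boxtimes|\det|^{-1})$. *)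

theory Defs
  imports "HOL-Analysis.Analysis"
begin

definition F_dist :: "('a::field \<Rightarrow> real) \<Rightarrow> 'a \<Rightarrow> 'a \<Rightarrow> real" where
  "F_dist absF x y = absF (x - y)"

definition integers_F :: "('a::field \<Rightarrow> real) \<Rightarrow> 'a set" where
  "integers_F absF = {x. absF x \<le> 1}"

definition residue_field_F :: "('a::field \<Rightarrow> real) \<Rightarrow> 'a set set" where
  "residue_field_F absF =
     integers_F absF // {(x, y). x \<in> integers_F absF \<and> y \<in> integers_F absF \<and> absF (x - y) < 1}"

text \<open>absF is the normalized absolute value of a nonarchimedean local field
  (of characteristic 0, which is enforced by the type class field_char_0):
  a nonarchimedean absolute value, discrete, complete, finite residue field of
  cardinality q, and normalized so that a uniformizer has absolute value 1/q.\<close>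
definition nonarch_local_field :: "('a::field_char_0 \<Rightarrow> real) \<Rightarrow> bool" where
  "nonarch_local_field absF \<longleftrightarrow>
     (\<forall>x. 0 \<le> absF x) \<and> (\<forall>x. absF x = 0 \<longleftrightarrow> x = 0) \<and>
     (\<forall>x y. absF (x * y) = absF x * absF y) \<and>
     (\<forall>x y. absF (x + y) \<le> max (absF x) (absF y)) \<and>
     Metric_space.mcomplete (UNIV::'a set) (F_dist absF) \<and>
     finite (residue_field_F absF) \<and>
     (\<exists>p. 0 < absF p \<and> absF p < 1 \<and> (\<forall>x. absF x < 1 \<longrightarrow> absF x \<le> absF p) \<and>
          absF p = 1 / real (card (residue_field_F absF)))"

type_synonym 'a mat2 = "'a^2^2"

definition GL2 :: "'a::field mat2 set" where
  "GL2 = {g. det g \<noteq> 0}"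

text \<open>For 2x2 matrices: rank one iff nonzero and singular.\<close>
definition O1 :: "'a::field mat2 set" where
  "O1 = {M. M \<noteq> 0 \<and> det M = 0}"

definition mat_dist :: "('a::field \<Rightarrow> real) \<Rightarrow> 'a mat2 \<Rightarrow> 'a mat2 \<Rightarrow> real" where
  "mat_dist absF M N = Max {absF (M $ i $ j - N $ i $ j) | i j. True}"

definition mat_topology :: "('a::field \<Rightarrow> real) \<Rightarrow> 'a mat2 topology" where
  "mat_topology absF = Metric_space.mtopology UNIV (mat_dist absF)"

text \<open>Functions on O_1 are represented as functions on M_2 vanishing outside O_1.\<close>
definition S_O1 :: "('a::field \<Rightarrow> real) \<Rightarrow> ('a mat2 \<Rightarrow> complex) set" where
  "S_O1 absF = {f.
     (\<forall>M. M \<notin> O1 \<longrightarrow> f M = 0) \<and>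
     (\<forall>M\<in>O1. \<exists>r>0. \<forall>N\<in>O1. mat_dist absF M N < r \<longrightarrow> f N = f M) \<and>
     (\<exists>K. compactin (subtopology (mat_topology absF) O1) K \<and> {M \<in> O1. f M \<noteq> 0} \<subseteq> K)}"

text \<open>Algebraic dual: complex-linear functionals on S(O_1), extended by 0 outside.\<close>
definition S_dual :: "('a::field \<Rightarrow> real) \<Rightarrow> (('a mat2 \<Rightarrow> complex) \<Rightarrow> complex) set" where
  "S_dual absF = {l.
     (\<forall>f\<in>S_O1 absF. \<forall>h\<in>S_O1 absF. l (\<lambda>M. f M + h M) = l f + l h) \<and>
     (\<forall>f\<in>S_O1 absF. \<forall>c. l (\<lambda>M. c * f M) = c * l f) \<and>
     (\<forall>f. f \<notin> S_O1 absF \<longrightarrow> l f = 0)}"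

text \<open>Action of g in G (first factor) on S^*(O_1) twisted by |det| (boxtimes |det|^-1):
  ((g,1) f)(M) = f(g^-1 M), contragredient (g l)(f) = l((g^-1,1) f) = l(M |-> f (g M)),
  times |det g|.\<close>
definition act :: "('a::field \<Rightarrow> real) \<Rightarrow> 'a mat2 \<Rightarrow> (('a mat2 \<Rightarrow> complex) \<Rightarrow> complex)
                    \<Rightarrow> (('a mat2 \<Rightarrow> complex) \<Rightarrow> complex)" where
  "act absF g l = (\<lambda>f. if f \<in> S_O1 absF
                        then complex_of_real (absF (det g)) * l (\<lambda>M. f (g ** M)) else 0)"

text \<open>(g - chi(g)) v with chi trivial.\<close>
definition act_minus_id :: "('a::field \<Rightarrow> real) \<Rightarrow> 'a mat2 \<Rightarrow> (('a mat2 \<Rightarrow> complex) \<Rightarrow> complex)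
                    \<Rightarrow> (('a mat2 \<Rightarrow> complex) \<Rightarrow> complex)" where
  "act_minus_id absF g l = (\<lambda>f. act absF g l f - l f)"

definition gen_invariant :: "('a::field \<Rightarrow> real) \<Rightarrow> (('a mat2 \<Rightarrow> complex) \<Rightarrow> complex) \<Rightarrow> bool" where
  "gen_invariant absF l \<longleftrightarrow> l \<in> S_dual absF \<and>
     (\<exists>k::nat. \<forall>gs. length gs = Suc k \<and> set gs \<subseteq> GL2 \<longrightarrow>
         foldr (act_minus_id absF) gs l = (\<lambda>f. 0))"

definition invariant :: "('a::field \<Rightarrow> real) \<Rightarrow> (('a mat2 \<Rightarrow> complex) \<Rightarrow> complex) \<Rightarrow> bool" where
  "invariant absF l \<longleftrightarrow> l \<in> S_dual absF \<and> (\<forall>g\<in>GL2. act absF g l = l)"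

end

theory Submission
  imports Defs
begin

text \<open>By induction on the depth of generalized invariance it suffices to show: if the
  differences \<open>\<phi> h = h\<cdot>l - l\<close> are all \<open>G\<close>-invariant, then \<open>l\<close> is invariant. Then
  \<open>\<phi> (g h) = \<phi> g + \<phi> h\<close>, so \<open>\<phi>\<close> is a homomorphism into an abelian group. Conjugating
  by \<open>diag(\<pi>, 1)\<close> shows that it kills the unipotent subgroups, hence \<open>SL\<^sub>2\<close>, so it only
  remains to see \<open>\<phi> (diag(1, t)) = 0\<close> for \<open>|t| = |\<pi>|\<close>. A rank one matrix \<open>M\<close> has a
  slope \<open>\<lambda>\<close> (second row \<open>= \<lambda> \<cdot>\<close> first row) in \<open>\<P>\<^sup>1(F) = \<O> \<union> w\<cdot>\<pi>\<O>\<close>. Cutting a test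
  function along small residue discs of \<open>\<lambda>\<close> and translating by lower unipotents, each
  piece \<open>h\<close> is supported in \<open>|\<lambda>| \<le> |\<pi>|\<^sup>n\<^sup>+\<^sup>1\<close> and invariant under lower unipotents of that
  size. On such \<open>h\<close>, \<open>diag(1, t)\<close> acts as the sum of the \<open>q\<close> lower unipotent translates by
  \<open>\<pi>\<^sup>n r\<close>, \<open>r\<close> running through residue representatives, whence
  \<open>(diag(1, t)\<cdot>l) h = |t| q l h = l h\<close>.\<close>

locale nonarch_abs =
  fixes absF :: "'a::field \<Rightarrow> real"
  assumes abs_nonneg[simp]: "0 \<le> absF x"
    and abs_zero_iff[simp]: "absF x = 0 \<longleftrightarrow> x = 0"
    and abs_mult: "absF (x * y) = absF x * absF y"
    and abs_ultra: "absF (x + y) \<le> max (absF x) (absF y)"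
begin

lemma abs_zero[simp]: "absF 0 = 0"
  by simp

lemma abs_pos: "x \<noteq> 0 \<Longrightarrow> 0 < absF x"
  using abs_nonneg[of x] abs_zero_iff[of x] by linarith

lemma abs_one[simp]: "absF 1 = 1"
  using abs_mult[of 1 1] abs_pos[of 1] by simp

lemma abs_minus_one[simp]: "absF (-1) = 1"
proof -
  have "absF (-1) ^ 2 = 1 ^ 2" using abs_mult[of "-1" "-1"] by (simp add: power2_eq_square)
  then show ?thesis using power2_eq_iff_nonneg[of "absF (-1)" 1] by simp
qed

lemma abs_uminus[simp]: "absF (- x) = absF x"
  using abs_mult[of "-1" x] by simp

lemma abs_diff_commute: "absF (x - y) = absF (y - x)"
  by (metis abs_uminus minus_diff_eq)

lemma abs_inverse: "absF (inverse x) = inverse (absF x)"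
proof (cases "x = 0")
  case False
  then have "absF x * absF (inverse x) = 1" by (metis abs_mult right_inverse abs_one)
  then show ?thesis by (metis inverse_unique)
qed simp

lemma abs_divide: "absF (x / y) = absF x / absF y"
  by (simp add: divide_inverse abs_mult abs_inverse)

lemma abs_power: "absF (x ^ n) = absF x ^ n"
  by (induction n) (auto simp: abs_mult)

lemma abs_ultra_le: "absF x \<le> e \<Longrightarrow> absF y \<le> e \<Longrightarrow> absF (x + y) \<le> e"
  using abs_ultra[of x y] by linarith

lemma abs_ultra_less: "absF x < e \<Longrightarrow> absF y < e \<Longrightarrow> absF (x + y) < e"
  using abs_ultra[of x y] by linarith

lemma abs_ultra_diff_le: "absF x \<le> e \<Longrightarrow> absF y \<le> e \<Longrightarrow> absF (x - y) \<le> e"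
  using abs_ultra_le[of x e "- y"] by simp

lemma abs_triangle: "absF (x + y) \<le> absF x + absF y"
  using abs_ultra[of x y] abs_nonneg[of x] abs_nonneg[of y] by linarith

lemma abs_isosceles: "absF y < absF x \<Longrightarrow> absF (x + y) = absF x"
proof -
  assume less: "absF y < absF x"
  have "absF (x + y) \<le> absF x" using abs_ultra[of x y] less by linarith
  moreover have "absF x \<le> max (absF (x + y)) (absF y)" using abs_ultra[of "x + y" "- y"] by simp
  ultimately show ?thesis using less by linarith
qed

lemma abs_isosceles_diff: "absF (x - y) < absF x \<Longrightarrow> absF y = absF x"
  using abs_isosceles[of "y - x" x] by (simp add: abs_diff_commute)

end

definition mk_mat2 :: "'a \<Rightarrow> 'a \<Rightarrow> 'a \<Rightarrow> 'a \<Rightarrow> 'a mat2" where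
  "mk_mat2 a b c d = (\<chi> i j. if i = 1 then (if j = 1 then a else b) else (if j = 1 then c else d))"

lemma mk_mat2_nth[simp]:
  "mk_mat2 a b c d $ 1 $ 1 = a" "mk_mat2 a b c d $ 1 $ 2 = b"
  "mk_mat2 a b c d $ 2 $ 1 = c" "mk_mat2 a b c d $ 2 $ 2 = d"
  by (simp_all add: mk_mat2_def)

lemma mat2_eq_iff:
  "(M::'a mat2) = N \<longleftrightarrow> M$1$1 = N$1$1 \<and> M$1$2 = N$1$2 \<and> M$2$1 = N$2$1 \<and> M$2$2 = N$2$2"
  by (simp add: vec_eq_iff forall_2)

lemma mat2_zero_iff: "(M::'a::zero mat2) = 0 \<longleftrightarrow> M$1$1 = 0 \<and> M$1$2 = 0 \<and> M$2$1 = 0 \<and> M$2$2 = 0"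
  by (simp add: mat2_eq_iff)

lemma mat2_mult_nth: "((A::'a::semiring_1 mat2) ** B) $ i $ j = A$i$1 * B$1$j + A$i$2 * B$2$j"
  by (simp add: matrix_matrix_mult_def sum_2)

lemma mk_mat2_mult:
  "mk_mat2 a b c d ** mk_mat2 a' b' c' d' =
    mk_mat2 (a*a' + b*c') (a*b' + b*d') (c*a' + d*c') (c*b' + d*d')"
  for a b c d :: "'a::semiring_1"
  by (simp add: mat2_eq_iff mat2_mult_nth)

lemma det_mat2: "det (M::'a::comm_ring_1 mat2) = M$1$1 * M$2$2 - M$1$2 * M$2$1"
  by (simp add: det_2)

lemma det_mk_mat2: "det (mk_mat2 a b c d) = a * d - b * (c::'a::comm_ring_1)"
  by (simp add: det_mat2)

lemma mat_one_eq_mk_mat2: "(mat 1 :: 'a::semiring_1 mat2) = mk_mat2 1 0 0 1"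
  by (simp add: mat2_eq_iff mat_def)

definition mat2_inv :: "'a::field mat2 \<Rightarrow> 'a mat2" where
  "mat2_inv g = mk_mat2 (g$2$2 / det g) (- g$1$2 / det g) (- g$2$1 / det g) (g$1$1 / det g)"

lemma mat2_inv_left: "det g \<noteq> 0 \<Longrightarrow> mat2_inv g ** g = mat 1"
  unfolding mat_one_eq_mk_mat2 mat2_inv_def
  by (simp add: mat2_eq_iff mat2_mult_nth field_simps) (simp_all add: det_mat2 algebra_simps)

lemma det_mat2_inv_nonzero: "det g \<noteq> 0 \<Longrightarrow> det (mat2_inv g) \<noteq> 0"
  using mat2_inv_left[of g] det_mul[of "mat2_inv g" g] det_I[where 'a='a and 'n=2] by auto

lemma mat2_inv_cancel: "det g \<noteq> 0 \<Longrightarrow> mat2_inv g ** (g ** M) = M"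
  by (simp add: matrix_mul_assoc mat2_inv_left)

lemma O1_left_mult_iff:
  fixes g M :: "'a::field mat2"
  assumes g: "det g \<noteq> 0"
  shows "g ** M \<in> O1 \<longleftrightarrow> M \<in> O1"
proof -
  have "g ** M = 0 \<longleftrightarrow> M = 0" using mat2_inv_cancel[OF g, of M] by auto
  then show ?thesis using g by (simp add: O1_def det_mul)
qed

definition upper_unip :: "'a::{zero,one} \<Rightarrow> 'a mat2" where "upper_unip x = mk_mat2 1 x 0 1"
definition lower_unip :: "'a::{zero,one} \<Rightarrow> 'a mat2" where "lower_unip y = mk_mat2 1 0 y 1"
definition diag1 :: "'a::{zero,one} \<Rightarrow> 'a mat2" where "diag1 t = mk_mat2 1 0 0 t"
definition antidiag1 :: "'a::{zero,one} mat2" where "antidiag1 = mk_mat2 0 1 1 0"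

lemma det_upper_unip[simp]: "det (upper_unip x) = (1::'a::comm_ring_1)"
  by (simp add: upper_unip_def det_mk_mat2)
lemma det_lower_unip[simp]: "det (lower_unip x) = (1::'a::comm_ring_1)"
  by (simp add: lower_unip_def det_mk_mat2)
lemma det_diag1[simp]: "det (diag1 t) = (t::'a::comm_ring_1)"
  by (simp add: diag1_def det_mk_mat2)
lemma det_antidiag1[simp]: "det antidiag1 = (-1::'a::comm_ring_1)"
  by (simp add: antidiag1_def det_mk_mat2)

lemma lower_unip_mult:
  "lower_unip c ** N = mk_mat2 (N$1$1) (N$1$2) (c * N$1$1 + N$2$1) (c * N$1$2 + N$2$2)"
  for N :: "'a::comm_ring_1 mat2"
  by (simp add: lower_unip_def mat2_eq_iff mat2_mult_nth)
lemma upper_unip_mult: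
  "upper_unip c ** N = mk_mat2 (N$1$1 + c * N$2$1) (N$1$2 + c * N$2$2) (N$2$1) (N$2$2)"
  for N :: "'a::comm_ring_1 mat2"
  by (simp add: upper_unip_def mat2_eq_iff mat2_mult_nth)
lemma diag1_mult: "diag1 t ** N = mk_mat2 (N$1$1) (N$1$2) (t * N$2$1) (t * N$2$2)"
  for N :: "'a::comm_ring_1 mat2"
  by (simp add: diag1_def mat2_eq_iff mat2_mult_nth)
lemma antidiag1_mult: "antidiag1 ** N = mk_mat2 (N$2$1) (N$2$2) (N$1$1) (N$1$2)"
  for N :: "'a::comm_ring_1 mat2"
  by (simp add: antidiag1_def mat2_eq_iff mat2_mult_nth)

lemma lower_unip_lower_unip_mult: "lower_unip c ** (lower_unip d ** N) = lower_unip (c + d) ** N"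
  for N :: "'a::comm_ring_1 mat2"
  by (simp add: lower_unip_mult mat2_eq_iff algebra_simps)
lemma lower_unip_zero_mult: "lower_unip 0 ** N = N"
  for N :: "'a::comm_ring_1 mat2"
  by (simp add: lower_unip_mult mat2_eq_iff)
lemma diag1_diag1_mult: "diag1 a ** diag1 b = diag1 (a * b :: 'a::comm_ring_1)"
  by (simp add: diag1_def mk_mat2_mult)
lemma antidiag1_antidiag1_mult: "antidiag1 ** (antidiag1 ** N) = N"
  for N :: "'a::comm_ring_1 mat2"
  by (simp add: antidiag1_mult mat2_eq_iff)
lemma antidiag1_lower_unip_mult:
  "antidiag1 ** (lower_unip c ** N) = upper_unip c ** (antidiag1 ** N)"
  for N :: "'a::comm_ring_1 mat2"
  by (simp add: antidiag1_mult lower_unip_mult upper_unip_mult mat2_eq_iff)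

context nonarch_abs
begin

lemma mat_dist_set_eq:
  "{absF (M $ i $ j - N $ i $ j) | i j. True} = (\<lambda>(i,j). absF (M $ i $ j - N $ i $ j)) ` UNIV"
  by auto

lemma entry_le_mat_dist: "absF (M $ i $ j - N $ i $ j) \<le> mat_dist absF M N"
  unfolding mat_dist_def mat_dist_set_eq by (rule Max_ge) auto

lemma mat_dist_le: "(\<And>i j. absF (M $ i $ j - N $ i $ j) \<le> e) \<Longrightarrow> mat_dist absF M N \<le> e"
  unfolding mat_dist_def mat_dist_set_eq by (subst Max_le_iff) auto

lemma mat_dist_less_entry: "mat_dist absF M N < e \<Longrightarrow> absF (M $ i $ j - N $ i $ j) < e"
  using entry_le_mat_dist[of M i j N] by linarith

lemma mat_dist_nonneg: "0 \<le> mat_dist absF M N"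
  using entry_le_mat_dist[of M 1 1 N] abs_nonneg[of "M $ 1 $ 1 - N $ 1 $ 1"] by linarith

lemma mat_dist_commute: "mat_dist absF M N = mat_dist absF N M"
  by (intro antisym mat_dist_le) (metis abs_diff_commute entry_le_mat_dist)+

lemma mat_dist_eq_0_iff: "mat_dist absF M N = 0 \<longleftrightarrow> M = N"
proof
  assume "mat_dist absF M N = 0"
  then have "\<And>i j. absF (M $ i $ j - N $ i $ j) = 0"
    by (metis antisym abs_nonneg entry_le_mat_dist)
  then show "M = N" by (simp add: vec_eq_iff)
qed (use mat_dist_nonneg mat_dist_le[of M M 0] in \<open>simp add: antisym\<close>)

lemma mat_dist_triangle: "mat_dist absF M P \<le> mat_dist absF M N + mat_dist absF N P"
proof (rule mat_dist_le)
  fix i j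
  show "absF (M $ i $ j - P $ i $ j) \<le> mat_dist absF M N + mat_dist absF N P"
    using abs_triangle[of "M $ i $ j - N $ i $ j" "N $ i $ j - P $ i $ j"]
      entry_le_mat_dist[of M i j N] entry_le_mat_dist[of N i j P] by simp
qed

sublocale MS: Metric_space UNIV "mat_dist absF"
  by unfold_locales
    (auto simp: mat_dist_nonneg mat_dist_commute mat_dist_eq_0_iff mat_dist_triangle)

lemma mat_topology_eq: "mat_topology absF = MS.mtopology"
  by (simp add: mat_topology_def)

definition entry_bound :: "'a mat2 \<Rightarrow> real" where
  "entry_bound g = absF (g$1$1) + absF (g$1$2) + absF (g$2$1) + absF (g$2$2) + 1"

lemma entry_bound_pos: "0 < entry_bound g"
  unfolding entry_bound_def using abs_nonneg[of "g$1$1"] abs_nonneg[of "g$1$2"]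
    abs_nonneg[of "g$2$1"] abs_nonneg[of "g$2$2"] by linarith

lemma abs_entry_le_entry_bound: "absF (g $ i $ j) \<le> entry_bound g"
proof -
  have "i = 1 \<or> i = 2" "j = 1 \<or> j = 2" using exhaust_2 by auto
  then show ?thesis unfolding entry_bound_def
    using abs_nonneg[of "g$1$1"] abs_nonneg[of "g$1$2"] abs_nonneg[of "g$2$1"]
      abs_nonneg[of "g$2$2"] by auto
qed

lemma mat_dist_left_mult_le:
  "mat_dist absF (g ** M) (g ** N) \<le> entry_bound g * mat_dist absF M N"
proof (rule mat_dist_le)
  fix i j
  let ?d = "mat_dist absF M N"
  have eq: "(g ** M) $ i $ j - (g ** N) $ i $ j = g$i$1 * (M$1$j - N$1$j) + g$i$2 * (M$2$j - N$2$j)"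
    by (simp add: mat2_mult_nth algebra_simps)
  have "absF (g$i$k * (M$k$j - N$k$j)) \<le> entry_bound g * ?d" for k
    unfolding abs_mult
    by (intro mult_mono abs_entry_le_entry_bound entry_le_mat_dist)
      (auto simp: less_imp_le[OF entry_bound_pos])
  then show "absF ((g ** M) $ i $ j - (g ** N) $ i $ j) \<le> entry_bound g * ?d"
    unfolding eq by (intro abs_ultra_le)
qed

lemma mat_dist_left_mult_less:
  "mat_dist absF M N < r / entry_bound g \<Longrightarrow> mat_dist absF (g ** M) (g ** N) < r"
  using mat_dist_left_mult_le[of g M N] entry_bound_pos[of g] by (simp add: field_simps)

lemma continuous_map_left_mult: "continuous_map MS.mtopology MS.mtopology (\<lambda>M. g ** M)"
  unfolding MS.metric_continuous_map[OF MS.Metric_space_axioms]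
  using entry_bound_pos[of g] mat_dist_left_mult_less
  by (metis UNIV_I divide_pos_pos image_subset_iff)

lemma compactin_bounded_entries:
  assumes "compactin MS.mtopology K"
  obtains B where "B > 0" "\<And>M i j. M \<in> K \<Longrightarrow> absF (M $ i $ j) \<le> B"
proof -
  obtain x r where x: "K \<subseteq> MS.mcball x r"
    using MS.compactin_imp_mbounded[OF assms] unfolding MS.mbounded_def by blast
  show thesis
  proof
    show "0 < entry_bound x + \<bar>r\<bar>" using entry_bound_pos[of x] by simp
    fix M i j assume "M \<in> K"
    then have "absF (M $ i $ j - x $ i $ j) \<le> \<bar>r\<bar>"
      using x entry_le_mat_dist[of x i j M] abs_diff_commute by fastforce
    then show "absF (M $ i $ j) \<le> entry_bound x + \<bar>r\<bar>"
      using abs_triangle[of "M $ i $ j - x $ i $ j" "x $ i $ j"] abs_entry_le_entry_bound[of x i j]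
      by simp
  qed
qed

text \<open>A Lebesgue number for the cover of a compact set by the balls of local constancy.\<close>
lemma uniformly_locally_constant_on_compactin:
  assumes K: "compactin MS.mtopology K" "K \<subseteq> O1"
    and lc: "\<And>M. M \<in> O1 \<Longrightarrow> \<exists>r>0. \<forall>N\<in>O1. mat_dist absF M N < r \<longrightarrow> f N = f M"
  obtains \<delta> where "\<delta> > 0" "\<And>M N. M \<in> K \<Longrightarrow> N \<in> O1 \<Longrightarrow> mat_dist absF M N < \<delta> \<Longrightarrow> f N = f M"
proof -
  obtain rr where rr: "\<And>M. M \<in> O1 \<Longrightarrow> rr M > 0 \<and> (\<forall>N\<in>O1. mat_dist absF M N < rr M \<longrightarrow> f N = f M)"
    using lc by metis
  let ?U = "(\<lambda>M. MS.mball M (rr M / 2)) ` K"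
  have "K \<subseteq> \<Union>?U" using rr K(2) by force
  then obtain F where F: "finite F" "F \<subseteq> ?U" "K \<subseteq> \<Union>F"
    using K(1) unfolding compactin_def by (metis (no_types, lifting) MS.openin_mball imageE)
  obtain K0 where K0: "K0 \<subseteq> K" "finite K0" "F = (\<lambda>M. MS.mball M (rr M / 2)) ` K0"
    using finite_subset_image[OF F(1,2)] by blast
  define \<delta> where "\<delta> = Min (insert 1 ((\<lambda>M. rr M / 2) ` K0))"
  have "\<delta> > 0" using K0 K(2) rr unfolding \<delta>_def by (subst Min_gr_iff) auto
  moreover have "f N = f M" if M: "M \<in> K" and N: "N \<in> O1" and dMN: "mat_dist absF M N < \<delta>" for M N
  proof -
    obtain M0 where M0: "M0 \<in> K0" "mat_dist absF M0 M < rr M0 / 2"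
      using F(3) K0(3) M by auto
    have M0O1: "M0 \<in> O1" using M0(1) K0(1) K(2) by blast
    have "\<delta> \<le> rr M0 / 2" using M0(1) K0(2) unfolding \<delta>_def by (intro Min_le) auto
    then have "mat_dist absF M0 N < rr M0" using mat_dist_triangle[of M0 N M] M0(2) dMN by linarith
    then show ?thesis using rr[OF M0O1] N M0(2) M K(2) by auto
  qed
  ultimately show thesis using that by blast
qed

abbreviation S where "S \<equiv> S_O1 absF"

lemma S_O1_vanishes: "f \<in> S \<Longrightarrow> M \<notin> O1 \<Longrightarrow> f M = 0"
  unfolding S_O1_def by blast

lemma S_O1_locally_constant:
  "f \<in> S \<Longrightarrow> M \<in> O1 \<Longrightarrow> \<exists>r>0. \<forall>N\<in>O1. mat_dist absF M N < r \<longrightarrow> f N = f M"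
  unfolding S_O1_def by blast

lemma S_O1_compact_support:
  assumes "f \<in> S"
  obtains K where "compactin MS.mtopology K" "K \<subseteq> O1" "{M \<in> O1. f M \<noteq> 0} \<subseteq> K"
  using assms unfolding S_O1_def mat_topology_eq compactin_subtopology by blast

lemma S_O1I:
  assumes "\<And>M. M \<notin> O1 \<Longrightarrow> f M = 0"
    "\<And>M. M \<in> O1 \<Longrightarrow> \<exists>r>0. \<forall>N\<in>O1. mat_dist absF M N < r \<longrightarrow> f N = f M"
    "compactin MS.mtopology K" "K \<subseteq> O1" "{M \<in> O1. f M \<noteq> 0} \<subseteq> K"
  shows "f \<in> S"
  unfolding S_O1_def mat_topology_eq compactin_subtopology using assms by blast

lemma S_O1_left_mult:
  assumes f: "f \<in> S" and g: "det g \<noteq> 0"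
  shows "(\<lambda>M. f (g ** M)) \<in> S"
proof -
  obtain K where K: "compactin MS.mtopology K" "K \<subseteq> O1" "{M \<in> O1. f M \<noteq> 0} \<subseteq> K"
    using S_O1_compact_support[OF f] by blast
  note O1_g = O1_left_mult_iff[OF g] and O1_ginv = O1_left_mult_iff[OF det_mat2_inv_nonzero[OF g]]
  show ?thesis
  proof (rule S_O1I[where K = "(\<lambda>M. mat2_inv g ** M) ` K"])
    fix M :: "'a mat2" assume "M \<in> O1"
    then obtain r where r: "r > 0" "\<forall>N\<in>O1. mat_dist absF (g ** M) N < r \<longrightarrow> f N = f (g ** M)"
      using S_O1_locally_constant[OF f] O1_g by blast
    then show "\<exists>r>0. \<forall>N\<in>O1. mat_dist absF M N < r \<longrightarrow> f (g ** N) = f (g ** M)"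
      using entry_bound_pos[of g] mat_dist_left_mult_less[of M _ r g] O1_g
      by (intro exI[of _ "r / entry_bound g"]) auto
  next
    show "{M \<in> O1. f (g ** M) \<noteq> 0} \<subseteq> (\<lambda>M. mat2_inv g ** M) ` K"
    proof
      fix M assume "M \<in> {M \<in> O1. f (g ** M) \<noteq> 0}"
      then have "g ** M \<in> K" using K(3) O1_g by blast
      then show "M \<in> (\<lambda>M. mat2_inv g ** M) ` K"
        using mat2_inv_cancel[OF g, of M] by (metis image_eqI)
    qed
  qed (use S_O1_vanishes[OF f] O1_g image_compactin[OF K(1) continuous_map_left_mult]
        K(2) O1_ginv in auto)
qed

lemma S_O1_zero: "(\<lambda>M. 0) \<in> S"
  by (rule S_O1I[where K = "{}"]) (auto intro: exI[of _ 1])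

lemma S_O1_mult_locally_constant:
  assumes f: "f \<in> S"
    and h: "\<And>M. M \<in> O1 \<Longrightarrow> \<exists>r>0. \<forall>N\<in>O1. mat_dist absF M N < r \<longrightarrow> h N = h M"
  shows "(\<lambda>M. f M * h M) \<in> S"
proof -
  obtain K where K: "compactin MS.mtopology K" "K \<subseteq> O1" "{M \<in> O1. f M \<noteq> 0} \<subseteq> K"
    using S_O1_compact_support[OF f] by blast
  show ?thesis
  proof (rule S_O1I[OF _ _ K(1,2)])
    fix M :: "'a mat2" assume M: "M \<in> O1"
    obtain r1 where "r1 > 0" "\<forall>N\<in>O1. mat_dist absF M N < r1 \<longrightarrow> f N = f M"
      using S_O1_locally_constant[OF f M] by blast
    moreover obtain r2 where "r2 > 0" "\<forall>N\<in>O1. mat_dist absF M N < r2 \<longrightarrow> h N = h M"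
      using h[OF M] by blast
    ultimately show "\<exists>r>0. \<forall>N\<in>O1. mat_dist absF M N < r \<longrightarrow> f N * h N = f M * h M"
      by (intro exI[of _ "min r1 r2"]) auto
  qed (use K(3) S_O1_vanishes[OF f] in auto)
qed

lemma S_O1_scale: "f \<in> S \<Longrightarrow> (\<lambda>M. c * f M) \<in> S"
  using S_O1_mult_locally_constant[of f "\<lambda>_. c"] by (simp add: mult.commute gt_ex)

lemma S_O1_add:
  assumes f: "f \<in> S" and h: "h \<in> S"
  shows "(\<lambda>M. f M + h M) \<in> S"
proof -
  obtain K where K: "compactin MS.mtopology K" "K \<subseteq> O1" "{M \<in> O1. f M \<noteq> 0} \<subseteq> K"
    using S_O1_compact_support[OF f] by blast
  obtain K' where K': "compactin MS.mtopology K'" "K' \<subseteq> O1" "{M \<in> O1. h M \<noteq> 0} \<subseteq> K'"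
    using S_O1_compact_support[OF h] by blast
  show ?thesis
  proof (rule S_O1I[where K = "K \<union> K'"])
    fix M :: "'a mat2" assume M: "M \<in> O1"
    obtain r1 where "r1 > 0" "\<forall>N\<in>O1. mat_dist absF M N < r1 \<longrightarrow> f N = f M"
      using S_O1_locally_constant[OF f M] by blast
    moreover obtain r2 where "r2 > 0" "\<forall>N\<in>O1. mat_dist absF M N < r2 \<longrightarrow> h N = h M"
      using S_O1_locally_constant[OF h M] by blast
    ultimately show "\<exists>r>0. \<forall>N\<in>O1. mat_dist absF M N < r \<longrightarrow> f N + h N = f M + h M"
      by (intro exI[of _ "min r1 r2"]) auto
  next
    show "{M \<in> O1. f M + h M \<noteq> 0} \<subseteq> K \<union> K'"
    proof
      fix M assume M: "M \<in> {M \<in> O1. f M + h M \<noteq> 0}"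
      then have "f M \<noteq> 0 \<or> h M \<noteq> 0" by auto
      then show "M \<in> K \<union> K'" using M K(3) K'(3) by blast
    qed
  qed (use S_O1_vanishes[OF f] S_O1_vanishes[OF h] compactin_Un[OF K(1) K'(1)] K(2) K'(2) in auto)
qed

lemma S_O1_sum:
  "finite I \<Longrightarrow> (\<And>i. i \<in> I \<Longrightarrow> F i \<in> S) \<Longrightarrow> (\<lambda>M. \<Sum>i\<in>I. F i M) \<in> S"
  by (induction I rule: finite_induct) (auto simp: S_O1_zero S_O1_add)

abbreviation Sdual where "Sdual \<equiv> S_dual absF"

lemma S_dual_add: "l \<in> Sdual \<Longrightarrow> f \<in> S \<Longrightarrow> h \<in> S \<Longrightarrow> l (\<lambda>M. f M + h M) = l f + l h"
  unfolding S_dual_def by blast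

lemma S_dual_scale: "l \<in> Sdual \<Longrightarrow> f \<in> S \<Longrightarrow> l (\<lambda>M. c * f M) = c * l f"
  unfolding S_dual_def by blast

lemma S_dual_outside: "l \<in> Sdual \<Longrightarrow> f \<notin> S \<Longrightarrow> l f = 0"
  unfolding S_dual_def by blast

lemma S_dual_zero: "l \<in> Sdual \<Longrightarrow> l (\<lambda>M. 0) = 0"
  using S_dual_scale[of l "\<lambda>M. 0" 0] S_O1_zero by simp

lemma S_dual_sum:
  assumes l: "l \<in> Sdual"
  shows "finite I \<Longrightarrow> (\<And>i. i \<in> I \<Longrightarrow> F i \<in> S) \<Longrightarrow> l (\<lambda>M. \<Sum>i\<in>I. F i M) = (\<Sum>i\<in>I. l (F i))"
proof (induction I rule: finite_induct)
  case (insert x I)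
  then show ?case
    using S_dual_add[OF l, of "F x" "\<lambda>M. \<Sum>i\<in>I. F i M"] S_O1_sum[of I F] by simp
qed (simp add: S_dual_zero[OF l])

lemma S_dual_sum_eq_0:
  assumes "l \<in> Sdual" "finite I" "\<And>i. i \<in> I \<Longrightarrow> F i \<in> S" "\<And>i. i \<in> I \<Longrightarrow> l (F i) = 0"
  shows "l (\<lambda>M. \<Sum>i\<in>I. F i M) = 0"
  using S_dual_sum[OF assms(1-3)] assms(4) by simp

lemma S_dualI:
  assumes "\<And>f h. f \<in> S \<Longrightarrow> h \<in> S \<Longrightarrow> l (\<lambda>M. f M + h M) = l f + l h"
    "\<And>f c. f \<in> S \<Longrightarrow> l (\<lambda>M. c * f M) = c * l f" "\<And>f. f \<notin> S \<Longrightarrow> l f = 0"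
  shows "l \<in> Sdual"
  unfolding S_dual_def using assms by blast

lemma act_apply: "f \<in> S \<Longrightarrow> act absF g l f = complex_of_real (absF (det g)) * l (\<lambda>M. f (g ** M))"
  by (simp add: act_def)

lemma act_act:
  assumes "det g \<noteq> 0"
  shows "act absF g (act absF h l) = act absF (g ** h) l"
proof
  fix f
  show "act absF g (act absF h l) f = act absF (g ** h) l f"
    using S_O1_left_mult[OF _ assms, of f]
    by (simp add: act_def det_mul abs_mult matrix_mul_assoc)
qed

lemma act_mat_one: "l \<in> Sdual \<Longrightarrow> act absF (mat 1) l = l"
  by (rule ext) (simp add: act_def det_I S_dual_outside)

lemma act_in_S_dual:
  assumes l: "l \<in> Sdual" and g: "det g \<noteq> 0"
  shows "act absF g l \<in> Sdual"
proof (rule S_dualI)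
  fix f h assume f: "f \<in> S" and h: "h \<in> S"
  then show "act absF g l (\<lambda>M. f M + h M) = act absF g l f + act absF g l h"
    using S_O1_add[OF f h] S_dual_add[OF l S_O1_left_mult[OF f g] S_O1_left_mult[OF h g]]
    by (simp add: act_def distrib_left)
next
  fix f c assume f: "f \<in> S"
  then show "act absF g l (\<lambda>M. c * f M) = c * act absF g l f"
    using S_O1_scale[OF f] S_dual_scale[OF l S_O1_left_mult[OF f g]] by (simp add: act_def)
qed (simp add: act_def)

lemma act_minus_id_in_S_dual:
  assumes l: "l \<in> Sdual" and g: "det g \<noteq> 0"
  shows "act_minus_id absF g l \<in> Sdual"
proof (rule S_dualI)
  fix f h assume "f \<in> S" "h \<in> S"
  then show "act_minus_id absF g l (\<lambda>M. f M + h M) =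
      act_minus_id absF g l f + act_minus_id absF g l h"
    using S_dual_add[OF act_in_S_dual[OF l g]] S_dual_add[OF l] by (simp add: act_minus_id_def)
next
  fix f c assume "f \<in> S"
  then show "act_minus_id absF g l (\<lambda>M. c * f M) = c * act_minus_id absF g l f"
    using S_dual_scale[OF act_in_S_dual[OF l g]] S_dual_scale[OF l]
    by (simp add: act_minus_id_def algebra_simps)
qed (simp add: act_minus_id_def act_def S_dual_outside[OF l])

lemma act_add: "act absF g (\<lambda>f. a f + b f) = (\<lambda>f. act absF g a f + act absF g b f)"
  by (rule ext) (simp add: act_def distrib_left)

lemma act_minus_id_mult:
  assumes g: "det g \<noteq> 0" and inv: "act absF g (act_minus_id absF h l) = act_minus_id absF h l"
  shows "act_minus_id absF (g ** h) l f = act_minus_id absF g l f + act_minus_id absF h l f"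
proof -
  have "act absF h l = (\<lambda>f. act_minus_id absF h l f + l f)" by (simp add: act_minus_id_def)
  then have "act absF (g ** h) l = (\<lambda>f. act_minus_id absF h l f + act absF g l f)"
    by (simp add: act_act[OF g, symmetric] act_add inv)
  then show ?thesis by (simp add: act_minus_id_def)
qed

lemma small_translation_invariant:
  assumes f: "f \<in> S" and g: "det g \<noteq> 0"
    and K: "{M \<in> O1. f M \<noteq> 0} \<subseteq> K"
    and \<delta>: "\<And>M N. M \<in> K \<Longrightarrow> N \<in> O1 \<Longrightarrow> mat_dist absF M N < \<delta> \<Longrightarrow> f N = f M"
    and moves: "\<And>X. X \<in> K \<or> g ** X \<in> K \<Longrightarrow> mat_dist absF X (g ** X) < \<delta>"
  shows "f (g ** N) = f N"
proof (cases "N \<in> O1 \<and> (f N \<noteq> 0 \<or> f (g ** N) \<noteq> 0)")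
  case True
  then have O1: "N \<in> O1" "g ** N \<in> O1" using O1_left_mult_iff[OF g] by auto
  then have "N \<in> K \<or> g ** N \<in> K" using K True by blast
  then show ?thesis using \<delta> moves O1 mat_dist_commute by metis
qed (use S_O1_vanishes[OF f] O1_left_mult_iff[OF g] in auto)

lemma mat_dist_lower_unip:
  assumes "absF (N$1$1) \<le> B" "absF (N$1$2) \<le> B"
  shows "mat_dist absF N (lower_unip c ** N) \<le> absF c * B"
proof (rule mat_dist_le)
  fix i j :: 2
  have "absF (c * N$1$1) \<le> absF c * B" "absF (c * N$1$2) \<le> absF c * B" "0 \<le> absF c * B"
    using assms order_trans[OF abs_nonneg assms(1)] by (simp_all add: abs_mult mult_left_mono)
  then show "absF (N $ i $ j - (lower_unip c ** N) $ i $ j) \<le> absF c * B"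
    using exhaust_2[of i] exhaust_2[of j] by (auto simp: lower_unip_mult)
qed

lemma mat_dist_upper_unip:
  assumes "absF (N$2$1) \<le> B" "absF (N$2$2) \<le> B"
  shows "mat_dist absF N (upper_unip c ** N) \<le> absF c * B"
proof (rule mat_dist_le)
  fix i j :: 2
  have "absF (c * N$2$1) \<le> absF c * B" "absF (c * N$2$2) \<le> absF c * B" "0 \<le> absF c * B"
    using assms order_trans[OF abs_nonneg assms(1)] by (simp_all add: abs_mult mult_left_mono)
  then show "absF (N $ i $ j - (upper_unip c ** N) $ i $ j) \<le> absF c * B"
    using exhaust_2[of i] exhaust_2[of j] by (auto simp: upper_unip_mult)
qed

lemma S_O1_unip_invariant:
  assumes f: "f \<in> S"
  obtains \<epsilon> where "\<epsilon> > 0"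
    "\<And>c N. absF c < \<epsilon> \<Longrightarrow> f (lower_unip c ** N) = f N \<and> f (upper_unip c ** N) = f N"
proof -
  obtain K where K: "compactin MS.mtopology K" "K \<subseteq> O1" "{M \<in> O1. f M \<noteq> 0} \<subseteq> K"
    using S_O1_compact_support[OF f] by blast
  obtain \<delta> where \<delta>: "\<delta> > 0" "\<And>M N. M \<in> K \<Longrightarrow> N \<in> O1 \<Longrightarrow> mat_dist absF M N < \<delta> \<Longrightarrow> f N = f M"
    using uniformly_locally_constant_on_compactin[OF K(1,2) S_O1_locally_constant[OF f]] by blast
  obtain B where B: "B > 0" "\<And>M i j. M \<in> K \<Longrightarrow> absF (M $ i $ j) \<le> B"
    using compactin_bounded_entries[OF K(1)] by blast
  show thesis
  proof
    show "\<delta> / B > 0" using \<delta>(1) B(1) by simp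
    fix c :: 'a and N :: "'a mat2"
    assume "absF c < \<delta> / B"
    then have cB: "absF c * B < \<delta>" using B(1) by (simp add: pos_less_divide_eq)
    have "mat_dist absF X (lower_unip c ** X) < \<delta>" if "X \<in> K \<or> lower_unip c ** X \<in> K" for X
    proof -
      have "absF (X$1$1) \<le> B \<and> absF (X$1$2) \<le> B"
        using that B(2)[of X 1] B(2)[of "lower_unip c ** X" 1 1]
          B(2)[of "lower_unip c ** X" 1 2] by (auto simp: lower_unip_mult)
      then show ?thesis using mat_dist_lower_unip[of X B c] cB by linarith
    qed
    moreover have "mat_dist absF X (upper_unip c ** X) < \<delta>" if "X \<in> K \<or> upper_unip c ** X \<in> K" for X
    proof -
      have "absF (X$2$1) \<le> B \<and> absF (X$2$2) \<le> B"
        using that B(2)[of X 2] B(2)[of "upper_unip c ** X" 2 1]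
          B(2)[of "upper_unip c ** X" 2 2] by (auto simp: upper_unip_mult)
      then show ?thesis using mat_dist_upper_unip[of X B c] cB by linarith
    qed
    ultimately show "f (lower_unip c ** N) = f N \<and> f (upper_unip c ** N) = f N"
      using small_translation_invariant[OF f _ K(3) \<delta>(2)] by simp
  qed
qed

end

section \<open>Residue discs\<close>

locale local_field_abs = nonarch_abs +
  fixes \<pi> :: 'a
  assumes abs_pi_pos: "0 < absF \<pi>" and abs_pi_less_one: "absF \<pi> < 1"
    and abs_less_one_le_pi: "absF x < 1 \<Longrightarrow> absF x \<le> absF \<pi>"
    and finite_residue_field: "finite (residue_field_F absF)"
    and abs_pi_eq: "absF \<pi> = 1 / real (card (residue_field_F absF))"
begin

lemma pi_nonzero[simp]: "\<pi> \<noteq> 0"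
  using abs_pi_pos by auto

lemma abs_pi_power_pos: "0 < absF \<pi> ^ m"
  using abs_pi_pos by simp

lemma abs_pi_power_le_one: "absF \<pi> ^ m \<le> 1"
  using abs_pi_pos abs_pi_less_one by (simp add: power_le_one)

lemma abs_pi_power_Suc_le: "absF \<pi> ^ Suc n \<le> absF \<pi> ^ n"
  using abs_pi_pos abs_pi_less_one by (simp add: mult_left_le_one_le)

lemma abs_eq_pi_power:
  assumes "0 < absF t" "absF t \<le> 1"
  obtains n where "absF t = absF \<pi> ^ n"
proof -
  obtain N where "absF \<pi> ^ N < absF t" using real_arch_pow_inv[OF assms(1) abs_pi_less_one] by blast
  then have "\<exists>n. absF t = absF \<pi> ^ n" using assms
  proof (induction N arbitrary: t)
    case (Suc N)
    show ?case
    proof (cases "absF t = 1")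
      case False
      then have "absF t \<le> absF \<pi>" using Suc.prems abs_less_one_le_pi by simp
      then have "absF (t / \<pi>) \<le> 1" "0 < absF (t / \<pi>)" "absF \<pi> ^ N < absF (t / \<pi>)"
        using Suc.prems abs_pi_pos
        by (simp_all add: abs_divide divide_le_eq_1 pos_less_divide_eq mult.commute)
      then obtain n where "absF (t / \<pi>) = absF \<pi> ^ n" using Suc.IH by blast
      then have "absF t = absF \<pi> ^ Suc n" using abs_pi_pos by (simp add: abs_divide field_simps)
      then show ?thesis by blast
    qed (intro exI[of _ 0], simp)
  qed simp
  then show thesis using that by blast
qed

abbreviation Oint where "Oint \<equiv> integers_F absF"

lemma Oint_iff: "x \<in> Oint \<longleftrightarrow> absF x \<le> 1"
  by (simp add: integers_F_def)

definition disc_rel :: "real \<Rightarrow> ('a \<times> 'a) set" where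
  "disc_rel e = {(x, y). x \<in> Oint \<and> y \<in> Oint \<and> absF (x - y) \<le> e}"

abbreviation discs :: "real \<Rightarrow> 'a set set" where
  "discs e \<equiv> Oint // disc_rel e"

lemma equiv_disc_rel: "0 \<le> e \<Longrightarrow> equiv Oint (disc_rel e)"
proof (rule equivI)
  show "refl_on Oint (disc_rel e)" if "0 \<le> e" using that by (auto simp: disc_rel_def refl_on_def)
  show "trans (disc_rel e)"
  proof (rule transI)
    fix x y z assume "(x, y) \<in> disc_rel e" "(y, z) \<in> disc_rel e"
    then show "(x, z) \<in> disc_rel e"
      using abs_ultra_le[of "x - y" e "y - z"] by (auto simp: disc_rel_def)
  qed
qed (auto simp: disc_rel_def sym_def abs_diff_commute)

lemma disc_diam:
  assumes "0 \<le> e" "X \<in> discs e" "x \<in> X" "y \<in> X"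
  shows "absF (x - y) \<le> e"
  using in_quotient_imp_in_rel[OF equiv_disc_rel assms(2), of x y] assms
  by (auto simp: disc_rel_def)

lemma disc_subset: "0 \<le> e \<Longrightarrow> X \<in> discs e \<Longrightarrow> X \<subseteq> Oint"
  using in_quotient_imp_subset equiv_disc_rel by blast

lemma disc_closed:
  assumes e: "0 \<le> e" "e \<le> 1" and X: "X \<in> discs e" and x: "x \<in> X" and y: "absF (y - x) \<le> e"
  shows "y \<in> X"
proof -
  obtain a where a: "X = disc_rel e `` {a}" "a \<in> Oint" using X by (rule quotientE)
  have "x \<in> Oint" using disc_subset[OF e(1) X] x by blast
  then have "absF y \<le> 1" using abs_ultra_le[of "y - x" 1 x] y e(2) by (simp add: Oint_iff)
  moreover have "absF (a - y) \<le> e" using x a abs_ultra_le[of "a - x" e "x - y"] y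
    by (auto simp: disc_rel_def abs_diff_commute)
  ultimately show ?thesis using a by (auto simp: disc_rel_def Oint_iff)
qed

lemma disc_of_mem: "0 \<le> e \<Longrightarrow> x \<in> Oint \<Longrightarrow> disc_rel e `` {x} \<in> discs e \<and> x \<in> disc_rel e `` {x}"
  using quotientI equiv_class_self equiv_disc_rel by metis

lemma discs_disjoint:
  "0 \<le> e \<Longrightarrow> X \<in> discs e \<Longrightarrow> Y \<in> discs e \<Longrightarrow> x \<in> X \<Longrightarrow> x \<in> Y \<Longrightarrow> X = Y"
  using quotient_disj[OF equiv_disc_rel] by blast

lemma sum_disc_indicator:
  assumes e: "0 \<le> e" and A: "finite A" "A \<subseteq> discs e"
  shows "(\<Sum>C\<in>A. if x \<in> C then 1 else 0 :: complex) = (if \<exists>C\<in>A. x \<in> C then 1 else 0)"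
proof (cases "\<exists>C\<in>A. x \<in> C")
  case True
  then obtain C where C: "C \<in> A" "x \<in> C" by blast
  then have "A \<inter> {C. x \<in> C} = {C}" using discs_disjoint[OF e] A(2) by blast
  then show ?thesis using A(1) C by (auto simp: sum.If_cases)
qed simp

definition disc_rep :: "'a set \<Rightarrow> 'a" where "disc_rep X = (SOME x. x \<in> X)"

lemma disc_rep_mem: "0 \<le> e \<Longrightarrow> X \<in> discs e \<Longrightarrow> disc_rep X \<in> X"
  unfolding disc_rep_def using in_quotient_imp_non_empty[OF equiv_disc_rel]
  by (metis ex_in_conv someI)

lemma residue_field_eq_discs: "residue_field_F absF = discs (absF \<pi>)"
proof -
  have "{(x, y). x \<in> Oint \<and> y \<in> Oint \<and> absF (x - y) < 1} = disc_rel (absF \<pi>)"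
    using abs_pi_less_one abs_less_one_le_pi by (force simp: disc_rel_def)
  then show ?thesis by (simp add: residue_field_F_def)
qed

definition residue_reps :: "'a set" where "residue_reps = disc_rep ` discs (absF \<pi>)"

lemma finite_residue_reps: "finite residue_reps"
  using finite_residue_field residue_field_eq_discs by (simp add: residue_reps_def)

lemma residue_reps_subset: "residue_reps \<subseteq> Oint"
  unfolding residue_reps_def using disc_rep_mem[of "absF \<pi>"] disc_subset[of "absF \<pi>"] by auto

lemma residue_reps_cover:
  assumes x: "x \<in> Oint"
  shows "\<exists>r\<in>residue_reps. absF (x - r) \<le> absF \<pi>"
proof -
  let ?X = "disc_rel (absF \<pi>) `` {x}"
  have X: "?X \<in> discs (absF \<pi>)" "x \<in> ?X" using disc_of_mem[of "absF \<pi>" x] x by auto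
  then have "absF (x - disc_rep ?X) \<le> absF \<pi>"
    using disc_diam[of "absF \<pi>" ?X] disc_rep_mem[of "absF \<pi>" ?X] by simp
  then show ?thesis using X unfolding residue_reps_def by blast
qed

lemma residue_reps_separated:
  assumes r: "r \<in> residue_reps" and r': "r' \<in> residue_reps" and d: "absF (r - r') \<le> absF \<pi>"
  shows "r = r'"
proof -
  obtain X where X: "X \<in> discs (absF \<pi>)" "r = disc_rep X"
    using r unfolding residue_reps_def by blast
  obtain Y where Y: "Y \<in> discs (absF \<pi>)" "r' = disc_rep Y"
    using r' unfolding residue_reps_def by blast
  have "r' \<in> X"
    using disc_closed[of "absF \<pi>" X "disc_rep X" r'] disc_rep_mem[of "absF \<pi>" X] X d abs_pi_less_one
    by (simp add: abs_diff_commute)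
  then have "X = Y" using discs_disjoint[of "absF \<pi>" X Y r'] disc_rep_mem[of "absF \<pi>" Y] X Y by simp
  then show ?thesis using X Y by simp
qed

lemma abs_pi_mult_card_residue_reps: "absF \<pi> * real (card residue_reps) = 1"
proof -
  have "inj_on disc_rep (discs (absF \<pi>))"
  proof
    fix X Y assume "X \<in> discs (absF \<pi>)" "Y \<in> discs (absF \<pi>)" "disc_rep X = disc_rep Y"
    then show "X = Y"
      using disc_rep_mem[of "absF \<pi>" X] disc_rep_mem[of "absF \<pi>" Y] discs_disjoint[of "absF \<pi>" X Y]
      by simp
  qed
  then have "card residue_reps = card (residue_field_F absF)"
    by (simp add: residue_reps_def residue_field_eq_discs card_image)
  moreover have "card (residue_field_F absF) \<noteq> 0" using abs_pi_eq abs_pi_pos by auto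
  ultimately show ?thesis using abs_pi_eq by simp
qed

text \<open>Expanding in base \<open>\<pi>\<close> with digits in \<open>residue_reps\<close>.\<close>
lemma finite_net:
  obtains D where "finite D" "D \<subseteq> Oint" "\<And>x. x \<in> Oint \<Longrightarrow> \<exists>d\<in>D. absF (x - d) \<le> absF \<pi> ^ m"
proof -
  have "\<exists>D. finite D \<and> D \<subseteq> Oint \<and> (\<forall>x\<in>Oint. \<exists>d\<in>D. absF (x - d) \<le> absF \<pi> ^ m)"
  proof (induction m)
    case 0
    show ?case by (intro exI[of _ "{0}"]) (auto simp: Oint_iff)
  next
    case (Suc m)
    then obtain D where D: "finite D" "D \<subseteq> Oint" "\<forall>x\<in>Oint. \<exists>d\<in>D. absF (x - d) \<le> absF \<pi> ^ m"
      by blast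
    let ?D = "(\<lambda>(r, d). r + \<pi> * d) ` (residue_reps \<times> D)"
    have "?D \<subseteq> Oint"
    proof
      fix z assume "z \<in> ?D"
      then obtain r d where "r \<in> residue_reps" "d \<in> D" "z = r + \<pi> * d" by auto
      moreover have "absF r \<le> 1" "absF d \<le> 1"
        using calculation residue_reps_subset D(2) by (auto simp: Oint_iff)
      moreover have "absF \<pi> * absF d \<le> 1"
        using calculation(5) abs_pi_pos abs_pi_less_one by (simp add: mult_le_one)
      ultimately show "z \<in> Oint" using abs_ultra_le[of r 1 "\<pi> * d"] by (simp add: Oint_iff abs_mult)
    qed
    moreover have "\<exists>z\<in>?D. absF (x - z) \<le> absF \<pi> ^ Suc m" if x: "x \<in> Oint" for x
    proof -
      obtain r where r: "r \<in> residue_reps" "absF (x - r) \<le> absF \<pi>"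
        using residue_reps_cover[OF x] by blast
      have "(x - r) / \<pi> \<in> Oint" using r(2) abs_pi_pos by (simp add: abs_divide Oint_iff)
      then obtain d where d: "d \<in> D" "absF ((x - r) / \<pi> - d) \<le> absF \<pi> ^ m" using D(3) by blast
      have "x - (r + \<pi> * d) = \<pi> * ((x - r) / \<pi> - d)" by (simp add: field_simps)
      then have "absF (x - (r + \<pi> * d)) \<le> absF \<pi> ^ Suc m"
        using d(2) abs_pi_pos by (simp add: abs_mult)
      moreover have "r + \<pi> * d \<in> ?D" using r(1) d(1) by (auto intro!: image_eqI[of _ _ "(r, d)"])
      ultimately show ?thesis by blast
    qed
    moreover have "finite ?D" using D(1) finite_residue_reps by simp
    ultimately show ?case by (intro exI[of _ ?D]) simp
  qed
  then show thesis using that by blast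
qed

lemma finite_discs: "finite (discs (absF \<pi> ^ m))"
proof -
  let ?e = "absF \<pi> ^ m"
  obtain D where D: "finite D" "D \<subseteq> Oint" "\<And>x. x \<in> Oint \<Longrightarrow> \<exists>d\<in>D. absF (x - d) \<le> ?e"
    using finite_net by blast
  have "discs ?e \<subseteq> (\<lambda>d. disc_rel ?e `` {d}) ` D"
  proof
    fix X assume "X \<in> discs ?e"
    then obtain x where x: "X = disc_rel ?e `` {x}" "x \<in> Oint" by (rule quotientE)
    obtain d where d: "d \<in> D" "absF (x - d) \<le> ?e" using D(3) x(2) by blast
    have "(x, d) \<in> disc_rel ?e" using d D(2) x(2) by (auto simp: disc_rel_def)
    then have "X = disc_rel ?e `` {d}"
      using x equiv_class_eq_iff[OF equiv_disc_rel[OF less_imp_le[OF abs_pi_power_pos]]] by metis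
    then show "X \<in> (\<lambda>d. disc_rel ?e `` {d}) ` D" using d(1) by blast
  qed
  then show ?thesis using D(1) finite_subset by blast
qed

end

section \<open>Slopes of rank one matrices\<close>

definition has_slope :: "'a::field mat2 \<Rightarrow> bool" where
  "has_slope N \<longleftrightarrow> N \<in> O1 \<and> (N$1$1 \<noteq> 0 \<or> N$1$2 \<noteq> 0)"

definition slope :: "'a::field mat2 \<Rightarrow> 'a" where
  "slope N = (if N$1$1 \<noteq> 0 then N$2$1 / N$1$1 else N$2$2 / N$1$2)"

lemma slope_rows: "has_slope N \<Longrightarrow> N$2$1 = slope N * N$1$1 \<and> N$2$2 = slope N * N$1$2"
  by (cases "N$1$1 = 0") (auto simp: has_slope_def O1_def det_mat2 slope_def field_simps)

lemma slope_unique: "has_slope N \<Longrightarrow> N$2$1 = m * N$1$1 \<Longrightarrow> N$2$2 = m * N$1$2 \<Longrightarrow> slope N = m"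
  using slope_rows[of N] by (auto simp: has_slope_def)

lemma has_slope_lower_unip_iff: "has_slope (lower_unip c ** N) \<longleftrightarrow> has_slope N"
  using O1_left_mult_iff[of "lower_unip c" N] by (simp add: has_slope_def lower_unip_mult)

lemma slope_lower_unip: "has_slope N \<Longrightarrow> slope (lower_unip c ** N) = slope N + c"
  using slope_rows[of N] has_slope_lower_unip_iff[of c N]
  by (intro slope_unique) (simp_all add: lower_unip_mult algebra_simps)

lemma has_slope_diag1_iff: "t \<noteq> 0 \<Longrightarrow> has_slope (diag1 t ** N) \<longleftrightarrow> has_slope N"
  using O1_left_mult_iff[of "diag1 t" N] by (simp add: has_slope_def diag1_mult)

lemma slope_diag1: "t \<noteq> 0 \<Longrightarrow> has_slope N \<Longrightarrow> slope (diag1 t ** N) = t * slope N"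
  using slope_rows[of N] has_slope_diag1_iff[of t N]
  by (intro slope_unique) (simp_all add: diag1_mult algebra_simps)

lemma has_slope_antidiag1_of_no_slope:
  assumes "N \<in> O1" "\<not> has_slope N"
  shows "has_slope (antidiag1 ** N) \<and> slope (antidiag1 ** N) = 0"
proof -
  have "N$1$1 = 0" "N$1$2 = 0" "N$2$1 \<noteq> 0 \<or> N$2$2 \<noteq> 0"
    using assms by (auto simp: has_slope_def O1_def mat2_zero_iff)
  moreover have "antidiag1 ** N \<in> O1" using O1_left_mult_iff[of antidiag1 N] assms(1) by simp
  ultimately show ?thesis by (auto simp: has_slope_def slope_def antidiag1_mult)
qed

lemma has_slope_antidiag1: "has_slope N \<Longrightarrow> slope N \<noteq> 0 \<Longrightarrow> has_slope (antidiag1 ** N)"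
  using slope_rows[of N] O1_left_mult_iff[of antidiag1 N]
  by (auto simp: has_slope_def antidiag1_mult)

lemma slope_antidiag1_mult_slope:
  assumes N: "has_slope N" and WN: "has_slope (antidiag1 ** N)"
  shows "slope (antidiag1 ** N) * slope N = 1"
proof -
  let ?m = "slope (antidiag1 ** N) * slope N"
  have "N$1$1 = ?m * N$1$1" "N$1$2 = ?m * N$1$2"
    using slope_rows[OF N] slope_rows[OF WN] by (simp_all add: antidiag1_mult mult.assoc)
  then show ?thesis using N by (auto simp: has_slope_def)
qed

section \<open>Cutting test functions along residue discs of the slope\<close>

context local_field_abs
begin

lemma S_O1_unip_invariant_pi_power:
  assumes f: "f \<in> S"
  obtains n where
    "\<And>c N. absF c \<le> absF \<pi> ^ Suc n \<Longrightarrow> f (lower_unip c ** N) = f N \<and> f (upper_unip c ** N) = f N"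
proof -
  obtain \<epsilon> where \<epsilon>: "\<epsilon> > 0"
    "\<And>c N. absF c < \<epsilon> \<Longrightarrow> f (lower_unip c ** N) = f N \<and> f (upper_unip c ** N) = f N"
    using S_O1_unip_invariant[OF f] by blast
  obtain n where "absF \<pi> ^ n < \<epsilon>" using real_arch_pow_inv[OF \<epsilon>(1) abs_pi_less_one] by blast
  then have "absF \<pi> ^ Suc n < \<epsilon>" using abs_pi_power_Suc_le[of n] by linarith
  then show thesis using that[of n] \<epsilon>(2) by (meson le_less_trans)
qed

lemma slope_near:
  assumes M: "has_slope M" and j: "M$1$j \<noteq> 0" and N: "N \<in> O1"
    and d: "mat_dist absF M N < absF (M$1$j)"
  shows "has_slope N \<and>
    absF (slope N - slope M) \<le> mat_dist absF M N * (absF (M$1$j) + absF (M$2$j)) / (absF (M$1$j))\<^sup>2"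
proof -
  let ?s = "absF (M$1$j)" and ?t = "absF (M$2$j)" and ?d = "mat_dist absF M N"
  have s: "?s > 0" using j abs_pos by blast
  have Nj: "absF (N$1$j) = ?s" using abs_isosceles_diff mat_dist_less_entry[OF d] by blast
  then have Nj0: "N$1$j \<noteq> 0" using s by auto
  have N_slope: "has_slope N" using N Nj0 exhaust_2[of j] by (auto simp: has_slope_def)
  have lM: "slope M = M$2$j / M$1$j" and lN: "slope N = N$2$j / N$1$j"
    using slope_rows[OF M] slope_rows[OF N_slope] j Nj0 exhaust_2[of j] by auto
  have eq: "slope N - slope M =
      ((N$2$j - M$2$j) * M$1$j - M$2$j * (N$1$j - M$1$j)) / (N$1$j * M$1$j)"
    unfolding lM lN using j Nj0 by (simp add: field_simps)
  have dk: "absF (N$k$j - M$k$j) \<le> ?d" for k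
    using entry_le_mat_dist[of M k j N] abs_diff_commute by metis
  have "absF ((N$2$j - M$2$j) * M$1$j) \<le> ?d * ?s"
    unfolding abs_mult using dk[of 2] s by (simp add: mult_right_mono)
  also have "\<dots> \<le> ?d * (?s + ?t)" using mat_dist_nonneg[of M N] by (simp add: mult_left_mono)
  finally have 1: "absF ((N$2$j - M$2$j) * M$1$j) \<le> ?d * (?s + ?t)" .
  have "absF (M$2$j * (N$1$j - M$1$j)) \<le> ?t * ?d"
    unfolding abs_mult using dk[of 1] by (simp add: mult_left_mono)
  also have "\<dots> \<le> ?d * (?s + ?t)" using mat_dist_nonneg[of M N] s by (simp add: algebra_simps)
  finally have 2: "absF (M$2$j * (N$1$j - M$1$j)) \<le> ?d * (?s + ?t)" .
  from 1 2 have "absF ((N$2$j - M$2$j) * M$1$j - M$2$j * (N$1$j - M$1$j)) \<le> ?d * (?s + ?t)"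
    by (rule abs_ultra_diff_le)
  then show ?thesis using N_slope s unfolding eq abs_divide abs_mult Nj
    by (simp add: divide_right_mono power2_eq_square)
qed

lemma no_slope_nbhd:
  assumes M: "M \<in> O1" "\<not> has_slope M"
  shows "\<exists>r>0. \<forall>N. mat_dist absF M N < r \<longrightarrow> \<not> (has_slope N \<and> absF (slope N) \<le> 1)"
proof -
  have row1: "M$1$1 = 0" "M$1$2 = 0" using M by (auto simp: has_slope_def)
  then obtain j where j: "M$2$j \<noteq> 0" using M by (auto simp: O1_def mat2_zero_iff)
  show ?thesis
  proof (intro exI[of _ "absF (M$2$j)"] conjI allI impI notI)
    show "0 < absF (M$2$j)" using j abs_pos by blast
    fix N assume d: "mat_dist absF M N < absF (M$2$j)" and N: "has_slope N \<and> absF (slope N) \<le> 1"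
    then have "absF (N$2$j) \<le> absF (N$1$j)"
      using slope_rows[of N] exhaust_2[of j] by (auto simp: abs_mult mult_left_le_one_le)
    moreover have "absF (N$1$j) < absF (M$2$j)"
      using mat_dist_less_entry[OF d, of 1 j] row1 exhaust_2[of j] by (auto simp: abs_diff_commute)
    moreover have "absF (N$2$j) = absF (M$2$j)"
      using abs_isosceles_diff[of "M$2$j" "N$2$j"] mat_dist_less_entry[OF d, of 2 j] by simp
    ultimately show False by simp
  qed
qed

definition disc_indicator :: "'a set \<Rightarrow> 'a mat2 \<Rightarrow> complex" where
  "disc_indicator C N = (if has_slope N \<and> slope N \<in> C then 1 else 0)"

lemma disc_indicator_locally_constant:
  assumes C: "C \<in> discs (absF \<pi> ^ m)" and M: "M \<in> O1"
  shows "\<exists>r>0. \<forall>N\<in>O1. mat_dist absF M N < r \<longrightarrow> disc_indicator C N = disc_indicator C M"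
proof (cases "has_slope M")
  case True
  then obtain j where j: "M$1$j \<noteq> 0" unfolding has_slope_def by blast
  let ?s = "absF (M$1$j)" and ?t = "absF (M$2$j)" and ?e = "absF \<pi> ^ m"
  have s: "?s > 0" using j abs_pos by blast
  have st: "?s + ?t > 0" using s abs_nonneg[of "M$2$j"] by linarith
  define r where "r = min ?s (?e * ?s\<^sup>2 / (?s + ?t))"
  have r: "r > 0"
    unfolding r_def using s st abs_pi_power_pos[of m] by (auto intro!: divide_pos_pos mult_pos_pos)
  show ?thesis
  proof (intro exI[of _ r] conjI r ballI impI)
    fix N assume N: "N \<in> O1" and d: "mat_dist absF M N < r"
    obtain N_slope: "has_slope N"
      and le: "absF (slope N - slope M) \<le> mat_dist absF M N * (?s + ?t) / ?s\<^sup>2"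
      using slope_near[OF True j N] d unfolding r_def by auto
    have "mat_dist absF M N * (?s + ?t) < ?e * ?s\<^sup>2"
      using d st unfolding r_def by (simp add: pos_less_divide_eq)
    then have "mat_dist absF M N * (?s + ?t) / ?s\<^sup>2 < ?e"
      using s j by (subst pos_divide_less_eq) simp_all
    then have "absF (slope N - slope M) \<le> ?e" using le by linarith
    then have "slope N \<in> C \<longleftrightarrow> slope M \<in> C"
      using disc_closed[OF less_imp_le[OF abs_pi_power_pos] abs_pi_power_le_one C]
      by (metis abs_diff_commute)
    then show "disc_indicator C N = disc_indicator C M"
      using N_slope True by (simp add: disc_indicator_def)
  qed
next
  case False
  obtain r where r: "r > 0" "\<forall>N. mat_dist absF M N < r \<longrightarrow> \<not> (has_slope N \<and> absF (slope N) \<le> 1)"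
    using no_slope_nbhd[OF M False] by blast
  have zero: "disc_indicator C N = 0" if "\<not> (has_slope N \<and> absF (slope N) \<le> 1)" for N
    using that disc_subset[OF less_imp_le[OF abs_pi_power_pos] C]
    by (auto simp: disc_indicator_def Oint_iff)
  show ?thesis using r zero zero[of M] False by (intro exI[of _ r]) auto
qed

definition piece :: "('a mat2 \<Rightarrow> complex) \<Rightarrow> 'a set \<Rightarrow> 'a mat2 \<Rightarrow> complex" where
  "piece F C N = F N * disc_indicator C N"

lemma piece_in_S_O1: "F \<in> S \<Longrightarrow> C \<in> discs (absF \<pi> ^ m) \<Longrightarrow> piece F C \<in> S"
  unfolding piece_def using S_O1_mult_locally_constant disc_indicator_locally_constant by blast

lemma piece_lower_unip:
  assumes C: "C \<in> discs (absF \<pi> ^ m)" and c: "absF c \<le> absF \<pi> ^ m"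
    and F: "F (lower_unip c ** X) = F X"
  shows "piece F C (lower_unip c ** X) = piece F C X"
proof -
  have "slope X + c \<in> C \<longleftrightarrow> slope X \<in> C"
    using disc_closed[OF less_imp_le[OF abs_pi_power_pos] abs_pi_power_le_one C, of _ "slope X + c"]
      disc_closed[OF less_imp_le[OF abs_pi_power_pos] abs_pi_power_le_one C, of _ "slope X"] c
    by fastforce
  then show ?thesis
    using F by (auto simp: piece_def disc_indicator_def has_slope_lower_unip_iff slope_lower_unip)
qed

abbreviation small_discs :: "real \<Rightarrow> 'a set set" where
  "small_discs e \<equiv> {C \<in> discs e. \<forall>x\<in>C. absF x < 1}"

lemma finite_small_discs: "finite (small_discs (absF \<pi> ^ m))"
  by (rule finite_subset[OF _ finite_discs[of m]]) blast

lemma ex_disc_iff: "0 \<le> e \<Longrightarrow> (\<exists>C\<in>discs e. x \<in> C) \<longleftrightarrow> absF x \<le> 1"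
  using disc_of_mem[of e x] disc_subset[of e] unfolding Oint_iff[symmetric] by blast

lemma ex_small_disc_iff:
  assumes e: "0 \<le> e" "e < 1"
  shows "(\<exists>C\<in>small_discs e. x \<in> C) \<longleftrightarrow> absF x < 1"
proof
  assume x: "absF x < 1"
  have "absF y < 1" if "y \<in> disc_rel e `` {x}" for y
    using that e x abs_ultra_less[of "y - x" 1 x] by (auto simp: disc_rel_def abs_diff_commute)
  then show "\<exists>C\<in>small_discs e. x \<in> C" using disc_of_mem[OF e(1), of x] x by (auto simp: Oint_iff)
qed auto

text \<open>\<open>\<P>\<^sup>1(F)\<close> is the disjoint union of the integral slopes and the images under \<open>w\<close> of the
  slopes of absolute value below \<open>1\<close>.\<close>
lemma antidiag1_small_slope_iff:
  assumes N: "N \<in> O1"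
  shows "has_slope (antidiag1 ** N) \<and> absF (slope (antidiag1 ** N)) < 1 \<longleftrightarrow>
    \<not> (has_slope N \<and> absF (slope N) \<le> 1)"
proof (cases "has_slope N")
  case True
  note inv = slope_antidiag1_mult_slope[OF True]
  show ?thesis
  proof (cases "absF (slope N) \<le> 1")
    case small: True
    have "absF (slope (antidiag1 ** N)) * absF (slope N) < 1" if "absF (slope (antidiag1 ** N)) < 1"
      using that mult_left_le[OF small abs_nonneg[of "slope (antidiag1 ** N)"]] by linarith
    then show ?thesis using inv True small by (auto simp flip: abs_mult)
  next
    case False
    then have "has_slope (antidiag1 ** N)" using has_slope_antidiag1[OF True] by force
    moreover have "absF (slope (antidiag1 ** N)) * absF (slope N) = 1"
      using inv[OF calculation] abs_mult by (metis abs_one)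
    ultimately show ?thesis using False
      by (metis less_one mult_le_cancel_right1 not_le order_less_le_trans abs_nonneg)
  qed
qed (use has_slope_antidiag1_of_no_slope[OF N] in auto)

lemma disc_indicators_sum_one:
  assumes N: "N \<in> O1"
  shows "(\<Sum>C\<in>discs (absF \<pi> ^ Suc n). disc_indicator C N)
       + (\<Sum>C\<in>small_discs (absF \<pi> ^ Suc n). disc_indicator C (antidiag1 ** N)) = 1"
proof -
  let ?e = "absF \<pi> ^ Suc n"
  have e: "0 \<le> ?e" "?e < 1"
    using abs_pi_power_pos[of "Suc n"] power_Suc_less_one[OF abs_pi_pos abs_pi_less_one]
    by simp_all
  have "(\<Sum>C\<in>discs ?e. disc_indicator C N) = (if has_slope N \<and> absF (slope N) \<le> 1 then 1 else 0)"
    using sum_disc_indicator[OF e(1) finite_discs order_refl, of "slope N"] ex_disc_iff[OF e(1)]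
    by (cases "has_slope N") (simp_all add: disc_indicator_def)
  moreover have "(\<Sum>C\<in>small_discs ?e. disc_indicator C (antidiag1 ** N)) =
      (if has_slope (antidiag1 ** N) \<and> absF (slope (antidiag1 ** N)) < 1 then 1 else 0)"
    using sum_disc_indicator[OF e(1) finite_small_discs[of "Suc n"], of "slope (antidiag1 ** N)"]
      ex_small_disc_iff[OF e]
    by (cases "has_slope (antidiag1 ** N)") (simp_all add: disc_indicator_def)
  ultimately show ?thesis using antidiag1_small_slope_iff[OF N] by simp
qed

lemma piece_decomposition:
  assumes f: "f \<in> S"
  shows "f N = (\<Sum>C\<in>discs (absF \<pi> ^ Suc n). piece f C N)
             + (\<Sum>C\<in>small_discs (absF \<pi> ^ Suc n). piece (\<lambda>M. f (antidiag1 ** M)) C (antidiag1 ** N))"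
proof (cases "N \<in> O1")
  case True
  then show ?thesis using disc_indicators_sum_one[OF True, of n]
    by (simp add: piece_def antidiag1_antidiag1_mult flip: sum_distrib_left distrib_left)
qed (simp add: piece_def S_O1_vanishes[OF f] antidiag1_antidiag1_mult)

definition adapted :: "nat \<Rightarrow> ('a mat2 \<Rightarrow> complex) \<Rightarrow> bool" where
  "adapted n h \<longleftrightarrow> h \<in> S \<and>
     (\<forall>N. h N \<noteq> 0 \<longrightarrow> has_slope N \<and> absF (slope N) \<le> absF \<pi> ^ Suc n) \<and>
     (\<forall>c N. absF c \<le> absF \<pi> ^ Suc n \<longrightarrow> h (lower_unip c ** N) = h N)"

lemma adapted_in_S_O1: "adapted n h \<Longrightarrow> h \<in> S"
  unfolding adapted_def by blast

lemma adapted_vanishes: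
  "adapted n h \<Longrightarrow> \<not> (has_slope N \<and> absF (slope N) \<le> absF \<pi> ^ Suc n) \<Longrightarrow> h N = 0"
  unfolding adapted_def by blast

lemma adapted_lower_unip:
  "adapted n h \<Longrightarrow> absF c \<le> absF \<pi> ^ Suc n \<Longrightarrow> h (lower_unip c ** N) = h N"
  unfolding adapted_def by blast

lemma adapted_diag1_large_slope:
  assumes h: "adapted n h" and t: "absF t = absF \<pi>"
    and N: "has_slope N" and large: "absF \<pi> ^ n < absF (slope N)"
  shows "h (diag1 t ** N) = 0" "r \<in> residue_reps \<Longrightarrow> h (lower_unip (- (\<pi> ^ n * r)) ** N) = 0"
proof -
  have t0: "t \<noteq> 0" using t by auto
  have "absF \<pi> ^ Suc n < absF (t * slope N)"
    using large t abs_pi_pos by (simp add: abs_mult)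
  then show "h (diag1 t ** N) = 0"
    using adapted_vanishes[OF h] slope_diag1[OF t0 N] by simp
  assume r: "r \<in> residue_reps"
  have "absF (\<pi> ^ n * r) \<le> absF \<pi> ^ n"
    using residue_reps_subset r abs_pi_power_pos[of n]
    by (auto simp: abs_mult abs_power Oint_iff intro: mult_left_le)
  then have "absF (slope N - \<pi> ^ n * r) = absF (slope N)"
    using abs_isosceles[of "- (\<pi> ^ n * r)" "slope N"] large by simp
  then show "h (lower_unip (- (\<pi> ^ n * r)) ** N) = 0"
    using adapted_vanishes[OF h] slope_lower_unip[OF N] large abs_pi_power_Suc_le[of n] by simp
qed

lemma adapted_diag1_small_slope:
  assumes h: "adapted n h" and t: "absF t = absF \<pi>"
    and N: "has_slope N" and small: "absF (slope N) \<le> absF \<pi> ^ n"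
  obtains r0 where "r0 \<in> residue_reps" "h (diag1 t ** N) = h (lower_unip (- (\<pi> ^ n * r0)) ** N)"
    "\<And>r. r \<in> residue_reps \<Longrightarrow> r \<noteq> r0 \<Longrightarrow> h (lower_unip (- (\<pi> ^ n * r)) ** N) = 0"
proof -
  let ?y = "slope N / \<pi> ^ n"
  have pn: "0 < absF \<pi> ^ n" by (rule abs_pi_power_pos)
  have "absF ?y \<le> 1" using small pn by (simp add: abs_divide abs_power)
  then obtain r0 where r0: "r0 \<in> residue_reps" "absF (?y - r0) \<le> absF \<pi>"
    using residue_reps_cover by (auto simp: Oint_iff)
  have dist_r: "absF (slope N - \<pi> ^ n * r) = absF \<pi> ^ n * absF (?y - r)" for r
  proof -
    have "slope N - \<pi> ^ n * r = \<pi> ^ n * (?y - r)" by (simp add: field_simps)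
    then show ?thesis by (simp add: abs_mult abs_power)
  qed
  show thesis
  proof
    show "r0 \<in> residue_reps" by (rule r0(1))
    have "absF (t * slope N) \<le> absF \<pi> ^ Suc n" using small t abs_pi_pos by (simp add: abs_mult)
    moreover have "absF (slope N - \<pi> ^ n * r0) \<le> absF \<pi> ^ Suc n"
      unfolding dist_r using r0(2) pn by (simp add: mult.commute)
    ultimately have c: "absF (t * slope N - (slope N - \<pi> ^ n * r0)) \<le> absF \<pi> ^ Suc n"
      by (rule abs_ultra_diff_le)
    have "diag1 t ** N =
        lower_unip (t * slope N - (slope N - \<pi> ^ n * r0)) ** (lower_unip (- (\<pi> ^ n * r0)) ** N)"
      using slope_rows[OF N]
      by (simp add: lower_unip_lower_unip_mult diag1_mult lower_unip_mult mat2_eq_iff algebra_simps)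
    then show "h (diag1 t ** N) = h (lower_unip (- (\<pi> ^ n * r0)) ** N)"
      using adapted_lower_unip[OF h c] by simp
  next
    fix r assume r: "r \<in> residue_reps" "r \<noteq> r0"
    show "h (lower_unip (- (\<pi> ^ n * r)) ** N) = 0"
    proof (rule adapted_vanishes[OF h], rule notI)
      assume "has_slope (lower_unip (- (\<pi> ^ n * r)) ** N) \<and>
        absF (slope (lower_unip (- (\<pi> ^ n * r)) ** N)) \<le> absF \<pi> ^ Suc n"
      then have "absF \<pi> ^ n * absF (?y - r) \<le> absF \<pi> ^ n * absF \<pi>"
        using slope_lower_unip[OF N] dist_r[of r] by (simp add: mult.commute)
      then have "absF (?y - r) \<le> absF \<pi>" using pn by simp
      then have "absF (r - r0) \<le> absF \<pi>"
        using abs_ultra_diff_le[of "?y - r0" "absF \<pi>" "?y - r"] r0(2) by simp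
      then show False using residue_reps_separated[OF r(1) r0(1)] r(2) by blast
    qed
  qed
qed

lemma adapted_diag1_eq_sum:
  assumes h: "adapted n h" and t: "absF t = absF \<pi>"
  shows "h (diag1 t ** N) = (\<Sum>r\<in>residue_reps. h (lower_unip (- (\<pi> ^ n * r)) ** N))"
proof (cases "has_slope N")
  case N: True
  show ?thesis
  proof (cases "absF (slope N) \<le> absF \<pi> ^ n")
    case True
    then obtain r0 where r0: "r0 \<in> residue_reps"
      "h (diag1 t ** N) = h (lower_unip (- (\<pi> ^ n * r0)) ** N)"
      "\<And>r. r \<in> residue_reps \<Longrightarrow> r \<noteq> r0 \<Longrightarrow> h (lower_unip (- (\<pi> ^ n * r)) ** N) = 0"
      using adapted_diag1_small_slope[OF h t N] by blast
    moreover have "(\<Sum>r\<in>residue_reps - {r0}. h (lower_unip (- (\<pi> ^ n * r)) ** N)) = 0"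
      using r0(3) by (intro sum.neutral) auto
    ultimately show ?thesis
      using sum.remove[OF finite_residue_reps r0(1), of "\<lambda>r. h (lower_unip (- (\<pi> ^ n * r)) ** N)"]
      by simp
  qed (use adapted_diag1_large_slope[OF h t N] in simp)
next
  case False
  have "t \<noteq> 0" using t by auto
  then show ?thesis
    using False adapted_vanishes[OF h] by (simp add: has_slope_lower_unip_iff has_slope_diag1_iff)
qed

lemma piece_translate_adapted:
  assumes F: "F \<in> S" and F_inv: "\<And>c N. absF c \<le> absF \<pi> ^ Suc n \<Longrightarrow> F (lower_unip c ** N) = F N"
    and C: "C \<in> discs (absF \<pi> ^ Suc n)" and c0: "c0 \<in> C"
  shows "adapted n (\<lambda>N. piece F C (lower_unip c0 ** N))"
  unfolding adapted_def
proof (intro conjI allI impI)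
  show "(\<lambda>N. piece F C (lower_unip c0 ** N)) \<in> S"
    using S_O1_left_mult[OF piece_in_S_O1[OF F C]] by simp
next
  fix N :: "'a mat2" assume "piece F C (lower_unip c0 ** N) \<noteq> 0"
  then have N: "has_slope N" and "slope N + c0 \<in> C"
    by (auto simp: piece_def disc_indicator_def has_slope_lower_unip_iff slope_lower_unip
        split: if_splits)
  then show "has_slope N" "absF (slope N) \<le> absF \<pi> ^ Suc n"
    using disc_diam[OF less_imp_le[OF abs_pi_power_pos] C _ c0] by force+
next
  fix c and N :: "'a mat2" assume c: "absF c \<le> absF \<pi> ^ Suc n"
  have "lower_unip c0 ** (lower_unip c ** N) = lower_unip c ** (lower_unip c0 ** N)"
    by (simp add: lower_unip_lower_unip_mult add.commute)
  then show "piece F C (lower_unip c0 ** (lower_unip c ** N)) = piece F C (lower_unip c0 ** N)"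
    using piece_lower_unip[OF C c F_inv[OF c, of "lower_unip c0 ** N"]] by simp
qed

end

section \<open>The differences \<open>h\<cdot>l - l\<close>\<close>

lemma additive_scaling_invariant_eq_0:
  fixes F :: "'a::field \<Rightarrow> 'b::ab_group_add"
  assumes add: "\<And>x y. F (x + y) = F x + F y" and scale: "\<And>x. F (c * x) = F x" and c: "c \<noteq> 1"
  shows "F y = 0"
proof -
  let ?z = "y / (1 - c)"
  have "c * ?z + (1 - c) * ?z = (c + (1 - c)) * ?z" by (rule distrib_right[symmetric])
  then have eq: "c * ?z + (1 - c) * ?z = ?z" by simp
  have y: "(1 - c) * ?z = y" using c by simp
  have "F ?z = F (c * ?z) + F y"
    using add[of "c * ?z" "(1 - c) * ?z"] unfolding eq by (simp only: y)
  then show "F y = 0" using scale[of ?z] by simp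
qed

locale invariant_differences = local_field_abs +
  fixes l :: "('a mat2 \<Rightarrow> complex) \<Rightarrow> complex"
  assumes l_in_S_dual: "l \<in> S_dual absF"
    and difference_invariant:
      "\<And>g h. det g \<noteq> 0 \<Longrightarrow> det h \<noteq> 0 \<Longrightarrow> act absF g (act_minus_id absF h l) = act_minus_id absF h l"
begin

abbreviation \<phi> where "\<phi> g \<equiv> act_minus_id absF g l"

lemma \<phi>_mult: "det g \<noteq> 0 \<Longrightarrow> det h \<noteq> 0 \<Longrightarrow> \<phi> (g ** h) f = \<phi> g f + \<phi> h f"
  using act_minus_id_mult[OF _ difference_invariant] by simp

lemma \<phi>_mat_one: "\<phi> (mat 1) f = 0"
  by (simp add: act_minus_id_def act_mat_one[OF l_in_S_dual])

lemma \<phi>_conj: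
  assumes ab: "a ** b = mat 1" and g: "det g \<noteq> 0"
  shows "\<phi> (a ** g ** b) f = \<phi> g f"
proof -
  have "det a * det b = 1" using ab det_mul[of a b] by (simp add: det_I)
  then have dets: "det a \<noteq> 0" "det b \<noteq> 0" by auto
  have "\<phi> (a ** g ** b) f = \<phi> a f + \<phi> g f + \<phi> b f"
    using \<phi>_mult[of a g] \<phi>_mult[of "a ** g" b] dets g by (simp add: det_mul)
  moreover have "\<phi> a f + \<phi> b f = 0" using \<phi>_mult[OF dets, of f] ab \<phi>_mat_one by simp
  ultimately show ?thesis by (simp add: algebra_simps)
qed

lemma \<phi>_upper_unip: "\<phi> (upper_unip x) f = 0"
proof (rule additive_scaling_invariant_eq_0[of "\<lambda>x. \<phi> (upper_unip x) f" \<pi>])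
  show "\<phi> (upper_unip (x + y)) f = \<phi> (upper_unip x) f + \<phi> (upper_unip y) f" for x y
  proof -
    have "upper_unip x ** upper_unip y = upper_unip (x + y)"
      by (simp add: upper_unip_def mk_mat2_mult add.commute)
    then show ?thesis using \<phi>_mult[of "upper_unip x" "upper_unip y" f] by simp
  qed
  show "\<phi> (upper_unip (\<pi> * x)) f = \<phi> (upper_unip x) f" for x
  proof -
    have "mk_mat2 \<pi> 0 0 1 ** upper_unip x ** mk_mat2 (1 / \<pi>) 0 0 1 = upper_unip (\<pi> * x)"
      "mk_mat2 \<pi> 0 0 1 ** mk_mat2 (1 / \<pi>) 0 0 1 = mat 1"
      by (simp_all add: upper_unip_def mk_mat2_mult mat_one_eq_mk_mat2)
    then show ?thesis
      using \<phi>_conj[of "mk_mat2 \<pi> 0 0 1" "mk_mat2 (1 / \<pi>) 0 0 1" "upper_unip x" f] by simp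
  qed
  show "\<pi> \<noteq> 1" using abs_pi_less_one by auto
qed

lemma \<phi>_lower_unip: "\<phi> (lower_unip x) f = 0"
proof (rule additive_scaling_invariant_eq_0[of "\<lambda>x. \<phi> (lower_unip x) f" \<pi>])
  show "\<phi> (lower_unip (x + y)) f = \<phi> (lower_unip x) f + \<phi> (lower_unip y) f" for x y
  proof -
    have "lower_unip x ** lower_unip y = lower_unip (x + y)"
      by (simp add: lower_unip_def mk_mat2_mult)
    then show ?thesis using \<phi>_mult[of "lower_unip x" "lower_unip y" f] by simp
  qed
  show "\<phi> (lower_unip (\<pi> * x)) f = \<phi> (lower_unip x) f" for x
  proof -
    have "mk_mat2 1 0 0 \<pi> ** lower_unip x ** mk_mat2 1 0 0 (1 / \<pi>) = lower_unip (\<pi> * x)"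
      "mk_mat2 1 0 0 \<pi> ** mk_mat2 1 0 0 (1 / \<pi>) = mat 1"
      by (simp_all add: lower_unip_def mk_mat2_mult mat_one_eq_mk_mat2)
    then show ?thesis
      using \<phi>_conj[of "mk_mat2 1 0 0 \<pi>" "mk_mat2 1 0 0 (1 / \<pi>)" "lower_unip x" f] by simp
  qed
  show "\<pi> \<noteq> 1" using abs_pi_less_one by auto
qed

lemma \<phi>_det_one:
  assumes "det h = 1" shows "\<phi> h f = 0"
proof -
  have bruhat: "\<phi> h f = 0" if d: "det h = 1" and c: "h$2$1 \<noteq> 0" for h
  proof -
    let ?u1 = "upper_unip ((h$1$1 - 1) / h$2$1)" and ?v = "lower_unip (h$2$1)"
      and ?u2 = "upper_unip ((h$2$2 - 1) / h$2$1)"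
    have "h = ?u1 ** ?v ** ?u2"
      using c d
      by (simp add: upper_unip_def lower_unip_def mk_mat2_mult mat2_eq_iff det_mat2 field_simps)
    then have "\<phi> h f = \<phi> (?u1 ** ?v) f + \<phi> ?u2 f"
      using \<phi>_mult[of "?u1 ** ?v" ?u2 f] by (simp add: det_mul)
    also have "\<dots> = 0" using \<phi>_mult[of ?u1 ?v f] \<phi>_upper_unip \<phi>_lower_unip by simp
    finally show ?thesis .
  qed
  show ?thesis
  proof (cases "h$2$1 = 0")
    case True
    then have "h$1$1 \<noteq> 0" using assms by (auto simp: det_mat2)
    then have "(lower_unip 1 ** h) $ 2 $ 1 \<noteq> 0" using True by (simp add: lower_unip_mult)
    then have "\<phi> (lower_unip 1 ** h) f = 0" using bruhat assms by (simp add: det_mul)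
    moreover have "h = lower_unip (-1) ** (lower_unip 1 ** h)"
      by (simp add: lower_unip_lower_unip_mult lower_unip_zero_mult)
    ultimately show ?thesis
      using \<phi>_mult[of "lower_unip (-1)" "lower_unip 1 ** h" f] \<phi>_lower_unip assms
      by (simp add: det_mul)
  qed (use bruhat assms in blast)
qed

lemma \<phi>_eq_\<phi>_diag1_det:
  assumes g: "det g \<noteq> 0"
  shows "\<phi> g f = \<phi> (diag1 (det g)) f"
proof -
  let ?h = "g ** diag1 (1 / det g)"
  have "diag1 (1 / det g) ** diag1 (det g) = mat 1"
    using g by (simp add: diag1_def mk_mat2_mult mat_one_eq_mk_mat2)
  then have "g = ?h ** diag1 (det g)" by (metis matrix_mul_assoc matrix_mul_rid)
  then show ?thesis using \<phi>_mult[of ?h "diag1 (det g)" f] \<phi>_det_one[of ?h] g by (simp add: det_mul)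
qed

lemma \<phi>_in_S_dual: "det g \<noteq> 0 \<Longrightarrow> \<phi> g \<in> Sdual"
  by (rule act_minus_id_in_S_dual[OF l_in_S_dual])

lemma \<phi>_left_mult_eq_0:
  assumes "\<phi> g f = 0" "f \<in> S" "det g \<noteq> 0" "det k \<noteq> 0"
  shows "\<phi> g (\<lambda>M. f (k ** M)) = 0"
proof -
  have "act absF k (\<phi> g) f = \<phi> g f" using difference_invariant[OF assms(4,3)] by simp
  then have "complex_of_real (absF (det k)) * \<phi> g (\<lambda>M. f (k ** M)) = 0"
    using act_apply[OF assms(2)] assms(1) by simp
  then show ?thesis using assms(4) by simp
qed

lemma l_lower_unip_invariant: "h \<in> S \<Longrightarrow> l (\<lambda>M. h (lower_unip c ** M)) = l h"
  using \<phi>_lower_unip[of c h] act_apply[of h "lower_unip c" l] by (simp add: act_minus_id_def)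

lemma \<phi>_diag1_adapted:
  assumes h: "adapted n h" and t: "absF t = absF \<pi>"
  shows "\<phi> (diag1 t) h = 0"
proof -
  have hS: "h \<in> S" using adapted_in_S_O1[OF h] .
  have "(\<lambda>M. h (diag1 t ** M)) = (\<lambda>M. \<Sum>r\<in>residue_reps. h (lower_unip (- (\<pi> ^ n * r)) ** M))"
    using adapted_diag1_eq_sum[OF h t] by (rule ext)
  then have "l (\<lambda>M. h (diag1 t ** M)) =
      l (\<lambda>M. \<Sum>r\<in>residue_reps. h (lower_unip (- (\<pi> ^ n * r)) ** M))"
    by simp
  also have "\<dots> = (\<Sum>r\<in>residue_reps. l (\<lambda>M. h (lower_unip (- (\<pi> ^ n * r)) ** M)))"
    by (rule S_dual_sum[OF l_in_S_dual finite_residue_reps]) (simp add: S_O1_left_mult[OF hS])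
  also have "\<dots> = of_nat (card residue_reps) * l h" using l_lower_unip_invariant[OF hS] by simp
  finally have "act absF (diag1 t) l h = complex_of_real (absF \<pi> * card residue_reps) * l h"
    using act_apply[OF hS] t by simp
  then show ?thesis by (simp add: act_minus_id_def abs_pi_mult_card_residue_reps)
qed

lemma \<phi>_diag1_piece:
  assumes F: "F \<in> S" and F_inv: "\<And>c N. absF c \<le> absF \<pi> ^ Suc n \<Longrightarrow> F (lower_unip c ** N) = F N"
    and C: "C \<in> discs (absF \<pi> ^ Suc n)" and t: "absF t = absF \<pi>"
  shows "\<phi> (diag1 t) (piece F C) = 0"
proof -
  let ?c0 = "disc_rep C"
  let ?h = "\<lambda>N. piece F C (lower_unip ?c0 ** N)"
  have "?c0 \<in> C" using disc_rep_mem[OF less_imp_le[OF abs_pi_power_pos] C] .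
  then have h: "adapted n ?h" using piece_translate_adapted[OF F F_inv C] by blast
  have "piece F C = (\<lambda>N. ?h (lower_unip (- ?c0) ** N))"
    by (rule ext) (simp only: lower_unip_lower_unip_mult right_minus lower_unip_zero_mult)
  moreover have "t \<noteq> 0" using t by auto
  then have "\<phi> (diag1 t) (\<lambda>N. ?h (lower_unip (- ?c0) ** N)) = 0"
    using \<phi>_left_mult_eq_0[OF \<phi>_diag1_adapted[OF h t] adapted_in_S_O1[OF h]] by simp
  ultimately show ?thesis by simp
qed

lemma \<phi>_diag1_uniformizer:
  assumes t: "absF t = absF \<pi>"
  shows "\<phi> (diag1 t) f = 0"
proof -
  have "t \<noteq> 0" using t by auto
  then have dual: "\<phi> (diag1 t) \<in> Sdual" and "det (diag1 t) \<noteq> 0" by (simp_all add: \<phi>_in_S_dual)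
  show ?thesis
  proof (cases "f \<in> S")
    case f: True
    obtain n where n:
      "\<And>c N. absF c \<le> absF \<pi> ^ Suc n \<Longrightarrow> f (lower_unip c ** N) = f N \<and> f (upper_unip c ** N) = f N"
      using S_O1_unip_invariant_pi_power[OF f] by blast
    let ?e = "absF \<pi> ^ Suc n" and ?fw = "\<lambda>M. f (antidiag1 ** M)"
    have fw: "?fw \<in> S" using S_O1_left_mult[OF f] by simp
    have f_inv: "f (lower_unip c ** N) = f N"
      "?fw (lower_unip c ** N) = ?fw N" if "absF c \<le> ?e" for c N
      using n[OF that] by (simp_all add: antidiag1_lower_unip_mult)
    let ?A = "\<lambda>N. \<Sum>C\<in>discs ?e. piece f C N"
      and ?B = "\<lambda>N. \<Sum>C\<in>small_discs ?e. piece ?fw C (antidiag1 ** N)"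
    have A: "?A \<in> S" "\<phi> (diag1 t) ?A = 0"
      using S_O1_sum[OF finite_discs] S_dual_sum_eq_0[OF dual finite_discs]
        piece_in_S_O1[OF f] \<phi>_diag1_piece[OF f f_inv(1) _ t] by blast+
    have B_pieces: "(\<lambda>N. piece ?fw C (antidiag1 ** N)) \<in> S"
        "\<phi> (diag1 t) (\<lambda>N. piece ?fw C (antidiag1 ** N)) = 0" if "C \<in> small_discs ?e" for C
    proof -
      have C: "C \<in> discs ?e" using that by blast
      show "(\<lambda>N. piece ?fw C (antidiag1 ** N)) \<in> S"
        using S_O1_left_mult[OF piece_in_S_O1[OF fw C], of antidiag1] by simp
      show "\<phi> (diag1 t) (\<lambda>N. piece ?fw C (antidiag1 ** N)) = 0"
        using \<phi>_left_mult_eq_0[OF \<phi>_diag1_piece[OF fw f_inv(2) C t] piece_in_S_O1[OF fw C],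
            of antidiag1]
          \<open>det (diag1 t) \<noteq> 0\<close> by simp
    qed
    have B: "?B \<in> S" "\<phi> (diag1 t) ?B = 0"
      by (rule S_O1_sum[OF finite_small_discs], rule B_pieces(1), assumption)
        (rule S_dual_sum_eq_0[OF dual finite_small_discs]; rule B_pieces; assumption)
    have "f = (\<lambda>N. ?A N + ?B N)" using piece_decomposition[OF f] by blast
    then show ?thesis using S_dual_add[OF dual A(1) B(1)] A(2) B(2) by simp
  qed (use S_dual_outside[OF dual] in simp)
qed

lemma \<phi>_diag1: "t \<noteq> 0 \<Longrightarrow> \<phi> (diag1 t) f = 0"
proof -
  have inverse: "\<phi> (diag1 a) f = - \<phi> (diag1 (1 / a)) f" if "a \<noteq> 0" for a
  proof -
    have "diag1 a ** diag1 (1 / a) = mat 1"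
      using that by (simp add: diag1_diag1_mult) (simp add: diag1_def mat_one_eq_mk_mat2)
    then show ?thesis
      using \<phi>_mult[of "diag1 a" "diag1 (1 / a)" f] that \<phi>_mat_one by (simp add: eq_neg_iff_add_eq_0)
  qed
  have powers: "\<phi> (diag1 t) f = 0" if "absF t = absF \<pi> ^ n" for n t
    using that
  proof (induction n arbitrary: t)
    case 0
    have "diag1 t = diag1 (\<pi> * t) ** diag1 (1 / \<pi>)" by (simp add: diag1_diag1_mult)
    moreover have "\<phi> (diag1 (1 / \<pi>)) f = 0" using inverse[of \<pi>] \<phi>_diag1_uniformizer[of \<pi>] by simp
    moreover have "t \<noteq> 0" using 0 by auto
    ultimately show ?case
      using \<phi>_mult[of "diag1 (\<pi> * t)" "diag1 (1 / \<pi>)" f] \<phi>_diag1_uniformizer[of "\<pi> * t"] 0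
      by (simp add: abs_mult)
  next
    case (Suc n)
    have "t \<noteq> 0" using Suc.prems abs_pi_pos by auto
    moreover have "diag1 t = diag1 \<pi> ** diag1 (t / \<pi>)" by (simp add: diag1_diag1_mult)
    moreover have "\<phi> (diag1 (t / \<pi>)) f = 0" using Suc abs_pi_pos by (simp add: abs_divide)
    ultimately show ?case using \<phi>_mult[of "diag1 \<pi>" "diag1 (t / \<pi>)" f] \<phi>_diag1_uniformizer by simp
  qed
  assume t: "t \<noteq> 0"
  show ?thesis
  proof (cases "absF t \<le> 1")
    case True
    then show ?thesis using abs_eq_pi_power[of t] abs_pos[OF t] powers by blast
  next
    case False
    have "absF (1 / t) \<le> 1" "0 < absF (1 / t)" using False t by (simp_all add: abs_divide abs_pos)
    then show ?thesis
      using abs_eq_pi_power[of "1 / t"] powers inverse[OF t] by (metis neg_equal_0_iff_equal)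
  qed
qed

lemma \<phi>_eq_0: "det g \<noteq> 0 \<Longrightarrow> \<phi> g = (\<lambda>f. 0)"
  using \<phi>_eq_\<phi>_diag1_det \<phi>_diag1 by auto

end

context local_field_abs
begin

lemma invariant_if_differences_invariant:
  assumes l: "l \<in> Sdual"
    and diff_inv: "\<And>g h. det g \<noteq> 0 \<Longrightarrow> det h \<noteq> 0 \<Longrightarrow>
      act absF g (act_minus_id absF h l) = act_minus_id absF h l"
    and g: "det g \<noteq> 0"
  shows "act absF g l = l"
proof -
  interpret invariant_differences absF \<pi> l
    by (intro invariant_differences.intro local_field_abs_axioms invariant_differences_axioms.intro
        l diff_inv)
  show ?thesis using \<phi>_eq_0[OF g] by (simp add: act_minus_id_def fun_eq_iff)
qed

lemma invariant_if_iterated_differences_vanish: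
  assumes "l \<in> Sdual"
    and "\<forall>gs. length gs = Suc k \<and> set gs \<subseteq> GL2 \<longrightarrow> foldr (act_minus_id absF) gs l = (\<lambda>f. 0)"
    and "g \<in> GL2"
  shows "act absF g l = l"
  using assms
proof (induction k arbitrary: l g)
  case 0
  then show ?case by (auto simp: act_minus_id_def fun_eq_iff dest: spec[of _ "[g]"])
next
  case (Suc k)
  have "act absF g (act_minus_id absF h l) = act_minus_id absF h l" if "h \<in> GL2" "g \<in> GL2" for g h
  proof (rule Suc.IH)
    show "act_minus_id absF h l \<in> Sdual"
      using act_minus_id_in_S_dual[OF Suc.prems(1)] that by (simp add: GL2_def)
    show "\<forall>gs. length gs = Suc k \<and> set gs \<subseteq> GL2 \<longrightarrow>
        foldr (act_minus_id absF) gs (act_minus_id absF h l) = (\<lambda>f. 0)"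
    proof (intro allI impI)
      fix gs :: "'a mat2 list" assume "length gs = Suc k \<and> set gs \<subseteq> GL2"
      then show "foldr (act_minus_id absF) gs (act_minus_id absF h l) = (\<lambda>f. 0)"
        using Suc.prems(2)[rule_format, of "gs @ [h]"] that by simp
    qed
  qed (use that in simp)
  then show ?case
    using invariant_if_differences_invariant[OF Suc.prems(1)] Suc.prems(3) by (simp add: GL2_def)
qed

end

lemma gen_invariant_if_invariant: "invariant absF l \<Longrightarrow> gen_invariant absF l"
  unfolding gen_invariant_def invariant_def
  by (intro conjI exI[of _ 0]) (auto simp: length_Suc_conv act_minus_id_def)

theorem lemma2p6:
  fixes absF :: "'a::field_char_0 \<Rightarrow> real"
    and l :: "('a mat2 \<Rightarrow> complex) \<Rightarrow> complex"
  assumes "nonarch_local_field absF"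
  shows "gen_invariant absF l \<longleftrightarrow> invariant absF l"
proof -
  obtain \<pi> where "0 < absF \<pi>" "absF \<pi> < 1" "\<And>x. absF x < 1 \<Longrightarrow> absF x \<le> absF \<pi>"
      "absF \<pi> = 1 / real (card (residue_field_F absF))"
    using assms unfolding nonarch_local_field_def by blast
  then interpret local_field_abs absF \<pi>
    using assms unfolding nonarch_local_field_def by unfold_locales auto
  show ?thesis
    using invariant_if_iterated_differences_vanish gen_invariant_if_invariant
    unfolding gen_invariant_def invariant_def by blast
qed

end
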